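(* For any graph class $\mathcal{C}$ the following are equivalent: (i) $\mathcal{C}$ has bounded expansion; (ii) for every $r \in \mathbb{N}$ there exists $m\in\mathbb{N}$ such that every vertex of every graph in $\mathcal{C}$ has finite $(r,m)$-rank (i.e. $(r,m)$-rank not equal to $\infty$).
   Context: Bounded expansion is in the sense of Nešetřil and Ossona de Mendez. Graphs are finite and simple. $N_r^G(v)$ is the closed $r$-neighborhood of $v$ (vertices reachable from $v$ by a path with at most $r$ edges, including $v$); $G-S$ is the subgraph induced on $V(G)\setminus S$. The $(r,m)$-rank of vertices of $G$ (values in $\mathbb{N}\cup\{\infty\}$) is defined by the following procedure: initially every vertex has rank $\infty$; in rounds $i=1,2,3,\dots$, every vertex $v$ that currently has rank $\infty$ receives rank $i$ if there exists a set $S\subseteq V(G)\setminus\{v\}$ with $|S|\le m$ such that every vertex of $N_r^{G-S}(v)\setminus\{v\}$ received a finite rank in rounds $1,\dots,i-1$ (all vertices are checked simultaneously in a round); the procedure stops when all vertices have finite rank or a round assigns no new rank. Vertices still of rank $\infty$ keep rank $\infty$. *)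

theory Defs
  imports Main "HOL-Library.Extended_Nat"
begin

type_synonym 'a graph = "'a set \<times> 'a set set"

definition verts :: "'a graph \<Rightarrow> 'a set" where
  "verts G = fst G"

definition edges :: "'a graph \<Rightarrow> 'a set set" where
  "edges G = snd G"

definition is_graph :: "'a graph \<Rightarrow> bool" where
  "is_graph G \<longleftrightarrow> finite (verts G) \<and>
     (\<forall>e\<in>edges G. \<exists>u v. e = {u, v} \<and> u \<noteq> v \<and> u \<in> verts G \<and> v \<in> verts G)"

definition induce :: "'a graph \<Rightarrow> 'a set \<Rightarrow> 'a graph" where
  "induce G X = (verts G \<inter> X, {e \<in> edges G. e \<subseteq> X})"

definition delete_verts :: "'a graph \<Rightarrow> 'a set \<Rightarrow> 'a graph" where
  "delete_verts G S = induce G (verts G - S)"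

fun nbhd :: "'a graph \<Rightarrow> nat \<Rightarrow> 'a \<Rightarrow> 'a set" where
  "nbhd G 0 v = {v}"
| "nbhd G (Suc k) v = nbhd G k v \<union> {w \<in> verts G. \<exists>u \<in> nbhd G k v. {u, w} \<in> edges G}"

text \<open>r-shallow minors: H is a depth-r minor of G if there are pairwise disjoint
nonempty branch sets (one per vertex of H) in V(G), each of which induces a subgraph
of radius at most r (some centre reaches all of the branch set within r steps inside
the induced subgraph), such that every edge of H is realised by an edge of G between
the corresponding branch sets. (Every shallow minor of G is isomorphic to one whose
vertex type is that of G, e.g. by naming branch sets by their centres.)\<close>

definition shallow_minor :: "nat \<Rightarrow> 'b graph \<Rightarrow> 'a graph \<Rightarrow> bool" where
  "shallow_minor r H G \<longleftrightarrow> (\<exists>\<phi> :: 'b \<Rightarrow> 'a set.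
     (\<forall>x\<in>verts H. \<phi> x \<subseteq> verts G \<and>
        (\<exists>c\<in>\<phi> x. \<phi> x \<subseteq> nbhd (induce G (\<phi> x)) r c)) \<and>
     (\<forall>x\<in>verts H. \<forall>y\<in>verts H. x \<noteq> y \<longrightarrow> \<phi> x \<inter> \<phi> y = {}) \<and>
     (\<forall>x\<in>verts H. \<forall>y\<in>verts H. {x, y} \<in> edges H \<longrightarrow>
        (\<exists>u\<in>\<phi> x. \<exists>v\<in>\<phi> y. {u, v} \<in> edges G)))"

definition bounded_expansion :: "'a graph set \<Rightarrow> bool" where
  "bounded_expansion \<C> \<longleftrightarrow> (\<forall>r::nat. \<exists>c::real. \<forall>G\<in>\<C>. \<forall>H :: 'a graph.
      is_graph H \<and> shallow_minor r H G \<longrightarrow>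
      real (card (edges H)) \<le> c * real (card (verts H)))"

text \<open>(r,m)-rank: ranked G r m i is the set of vertices that received a (finite)
rank in rounds 1..i.\<close>

fun ranked :: "'a graph \<Rightarrow> nat \<Rightarrow> nat \<Rightarrow> nat \<Rightarrow> 'a set" where
  "ranked G r m 0 = {}"
| "ranked G r m (Suc i) = ranked G r m i \<union>
     {v \<in> verts G. \<exists>S. S \<subseteq> verts G - {v} \<and> card S \<le> m \<and>
        nbhd (delete_verts G S) r v - {v} \<subseteq> ranked G r m i}"

definition rank :: "'a graph \<Rightarrow> nat \<Rightarrow> nat \<Rightarrow> 'a \<Rightarrow> enat" where
  "rank G r m v = (if \<exists>i. v \<in> ranked G r m i
                   then enat (LEAST i. v \<in> ranked G r m i) else \<infinity>)"

end

theory Submission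
  imports Defs "HOL-Library.Disjoint_Sets"
begin

text \<open>
  If all vertices have finite \<open>(4 r + 1, m)\<close>-rank, choose for every vertex \<open>v\<close> a set \<open>F v\<close> of at most
  \<open>m\<close> vertices whose removal leaves only vertices of smaller rank within distance \<open>4 r + 1\<close> of \<open>v\<close>.
  In an \<open>r\<close>-shallow minor, orient each edge towards the branch set whose vertex of maximal rank is
  larger. Iterating \<open>F\<close> at most \<open>4 r + 1\<close> times from the top vertex of a branch set reaches all
  out-neighbouring branch sets, so out-degrees, and hence edge densities, are at most
  \<open>(m + 1)^(4 r + 1)\<close>.

  Conversely, let the \<open>2 r\<close>-shallow minors have edge density at most \<open>C\<close> and suppose some vertex never
  receives an \<open>(r, r d)\<close>-rank. The unranked vertices form a set \<open>U\<close> in which every vertex is the centre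
  of a fan of \<open>d\<close> paths of length at most \<open>r\<close> to \<open>U\<close> that are disjoint apart from the centre. Take
  a maximum packing of internally disjoint \<open>U\<close>-paths of length at most \<open>2 r\<close> with distinct pairs of
  ends; contracting it is a \<open>2 r\<close>-shallow minor on \<open>U\<close>, so at least half of \<open>U\<close> has at most \<open>4 C\<close>
  neighbours in it, and among these we choose an independent set. By maximality, all but \<open>4 C\<close> fan
  paths of an independent centre run into the interior of a packed path. Contracting the initial
  segments of these fan paths onto their centres, and the interiors of the packed paths they hit,
  gives a second \<open>2 r\<close>-shallow minor; counting its edges bounds \<open>d\<close> in terms of \<open>r\<close> and \<open>C\<close>.
\<close>

section \<open>Walks and shallow minors\<close>

definition walk :: "'a graph \<Rightarrow> 'a list \<Rightarrow> bool" where
  "walk G ps \<longleftrightarrow> ps \<noteq> [] \<and> set ps \<subseteq> verts G \<and>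
     (\<forall>i. Suc i < length ps \<longrightarrow> {ps!i, ps!Suc i} \<in> edges G)"

lemma walk_Nil [simp]: "\<not> walk G []"
  by (simp add: walk_def)

lemma walk_single [simp]: "walk G [x] \<longleftrightarrow> x \<in> verts G"
  by (simp add: walk_def)

lemma walk_Cons_Cons [simp]:
  "walk G (x # y # xs) \<longleftrightarrow> {x, y} \<in> edges G \<and> x \<in> verts G \<and> walk G (y # xs)"
  unfolding walk_def by (auto simp: nth_Cons split: nat.splits)

lemma walk_verts: "walk G ps \<Longrightarrow> set ps \<subseteq> verts G"
  by (simp add: walk_def)

lemma walk_append:
  assumes "xs \<noteq> []" "ys \<noteq> []"
  shows "walk G (xs @ ys) \<longleftrightarrow> walk G xs \<and> walk G ys \<and> {last xs, hd ys} \<in> edges G"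
  using assms
proof (induction xs rule: list_nonempty_induct)
  case (single x)
  then show ?case by (cases ys) auto
next
  case (cons x xs)
  then show ?case by (cases xs) auto
qed

lemma walk_prefix: "walk G (xs @ ys) \<Longrightarrow> xs \<noteq> [] \<Longrightarrow> walk G xs"
  by (cases "ys = []") (auto simp: walk_append)

lemma walk_suffix: "walk G (xs @ ys) \<Longrightarrow> ys \<noteq> [] \<Longrightarrow> walk G ys"
  by (cases "xs = []") (auto simp: walk_append)

lemma walk_join:
  assumes "walk G xs" "walk G ys" "last xs = hd ys"
  shows "walk G (xs @ tl ys)"
proof (cases "tl ys")
  case Nil
  then show ?thesis using assms(1) by simp
next
  case (Cons y zs)
  then have "ys = hd ys # y # zs" using assms(2) by (cases ys) auto
  then show ?thesis using assms walk_append[of xs "tl ys" G] Cons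
    by (metis walk_Cons_Cons list.sel(1) list.simps(3) walk_Nil)
qed

lemma walk_rev [simp]: "walk G (rev ps) \<longleftrightarrow> walk G ps"
proof (induction ps)
  case (Cons x xs)
  show ?case
  proof (cases "xs = []")
    case False
    then show ?thesis using Cons.IH walk_append[of "rev xs" "[x]" G] walk_append[of "[x]" xs G]
      by (auto simp: last_rev insert_commute)
  qed simp
qed simp

lemma nbhd_self: "v \<in> nbhd G k v"
  by (induction k) auto

lemma nbhd_verts: "u \<in> nbhd G k v \<Longrightarrow> u = v \<or> u \<in> verts G"
  by (induction k arbitrary: u) auto

lemma walk_last_in_nbhd:
  "walk G ps \<Longrightarrow> length ps \<le> Suc k \<Longrightarrow> last ps \<in> nbhd G k (hd ps)"
proof (induction ps arbitrary: k rule: rev_induct)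
  case (snoc u ps)
  show ?case
  proof (cases "ps = []")
    case True
    then show ?thesis by (simp add: nbhd_self)
  next
    case False
    then obtain k' where k: "k = Suc k'" using snoc.prems by (cases k) auto
    have "walk G ps" "{last ps, u} \<in> edges G" "u \<in> verts G"
      using snoc.prems False walk_append[of ps "[u]" G] by auto
    then show ?thesis using snoc k False by auto
  qed
qed simp

lemma nbhd_imp_walk:
  "v \<in> verts G \<Longrightarrow> u \<in> nbhd G k v \<Longrightarrow>
   \<exists>ps. walk G ps \<and> hd ps = v \<and> last ps = u \<and> length ps \<le> Suc k"
proof (induction k arbitrary: u)
  case 0
  then show ?case by (intro exI[of _ "[v]"]) auto
next
  case (Suc k)
  show ?case
  proof (cases "u \<in> nbhd G k v")
    case True
    then show ?thesis using Suc by (meson le_SucI)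
  next
    case False
    then obtain w where w: "w \<in> nbhd G k v" "{w, u} \<in> edges G" "u \<in> verts G"
      using Suc.prems by auto
    obtain ps where "walk G ps" "hd ps = v" "last ps = w" "length ps \<le> Suc k"
      using Suc.IH[OF Suc.prems(1) w(1)] by blast
    moreover have "ps \<noteq> []" using \<open>walk G ps\<close> by auto
    ultimately show ?thesis using w walk_append[of ps "[u]" G]
      by (intro exI[of _ "ps @ [u]"]) auto
  qed
qed

lemma verts_induce [simp]: "verts (induce G X) = verts G \<inter> X"
  by (simp add: induce_def verts_def)

lemma edges_induce [simp]: "edges (induce G X) = {e \<in> edges G. e \<subseteq> X}"
  by (simp add: induce_def edges_def)

lemma walk_induce: "walk (induce G X) ps \<longleftrightarrow> walk G ps \<and> set ps \<subseteq> X"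
proof
  assume "walk G ps \<and> set ps \<subseteq> X"
  moreover have "{ps!i, ps!Suc i} \<subseteq> set ps" if "Suc i < length ps" for i
    using that by auto
  ultimately show "walk (induce G X) ps" unfolding walk_def by auto
qed (auto simp: walk_def)

lemma walk_delete_verts: "walk (delete_verts G S) ps \<longleftrightarrow> walk G ps \<and> set ps \<inter> S = {}"
  unfolding delete_verts_def walk_induce using walk_verts by blast

lemma walk_set_in_nbhd_induce:
  assumes "walk G ps" "set ps \<subseteq> X" "length ps \<le> Suc k" "z \<in> set ps"
  shows "z \<in> nbhd (induce G X) k (hd ps)"
proof -
  obtain as bs where ps: "ps = as @ z # bs" using assms(4) by (meson split_list)
  then have "walk (induce G X) (as @ [z])"
    using assms(1,2) walk_prefix[of G "as @ [z]" bs] walk_induce by fastforce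
  moreover have "hd (as @ [z]) = hd ps" using ps by (cases as) auto
  ultimately show ?thesis using walk_last_in_nbhd[of _ "as @ [z]" k] assms(3) ps by fastforce
qed

lemma walk_in_radius:
  assumes "B \<subseteq> verts G" "c \<in> B" "B \<subseteq> nbhd (induce G B) r c" "a \<in> B" "b \<in> B"
  obtains ps where "walk G ps" "hd ps = a" "last ps = b" "set ps \<subseteq> B" "length ps \<le> 2*r+1"
proof -
  have c: "c \<in> verts (induce G B)" using assms(1,2) by auto
  obtain p where p: "walk (induce G B) p" "hd p = c" "last p = a" "length p \<le> Suc r"
    using nbhd_imp_walk[OF c, of a r] assms(3,4) by blast
  obtain q where q: "walk (induce G B) q" "hd q = c" "last q = b" "length q \<le> Suc r"
    using nbhd_imp_walk[OF c, of b r] assms(3,5) by blast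
  have "p \<noteq> []" "q \<noteq> []" using p(1) q(1) by auto
  have "walk (induce G B) (rev p @ tl q)"
    using walk_join[of _ "rev p" q] p q \<open>p \<noteq> []\<close> by (simp add: last_rev)
  moreover have "hd (rev p @ tl q) = a" using p(3) \<open>p \<noteq> []\<close> by (simp add: hd_rev)
  moreover have "last (rev p @ tl q) = b"
    using p(2) q(2,3) \<open>p \<noteq> []\<close> \<open>q \<noteq> []\<close> by (cases q; cases "tl q") (auto simp: last_rev)
  moreover have "length (rev p @ tl q) \<le> 2*r+1" using p(4) q(4) by simp
  ultimately show ?thesis using that walk_induce by blast
qed

definition inner_verts :: "'a list \<Rightarrow> 'a set" where
  "inner_verts ps = set ps - {hd ps, last ps}"

lemma walk_imp_distinct_walk:
  assumes "walk G ps"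
  obtains qs where "walk G qs" "distinct qs" "hd qs = hd ps" "last qs = last ps"
    "set qs \<subseteq> set ps" "length qs \<le> length ps"
  using assms
proof (induction ps arbitrary: thesis rule: length_induct)
  case (1 ps)
  show ?case
  proof (cases "distinct ps")
    case True
    then show ?thesis using "1.prems" by blast
  next
    case False
    then obtain xs y ys zs where ps: "ps = xs @ [y] @ ys @ [y] @ zs"
      using not_distinct_decomp by blast
    have "walk G (xs @ [y])" "walk G (y # zs)"
      using "1.prems"(2) ps walk_prefix[of G "xs @ [y]"] walk_suffix[of G "xs @ y # ys" "y # zs"]
      by auto
    then have "walk G (xs @ y # zs)" using walk_join[of G "xs @ [y]" "y # zs"] by simp
    moreover have "length (xs @ y # zs) < length ps" using ps by simp
    moreover have "hd (xs @ y # zs) = hd ps" using ps by (cases xs) auto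
    moreover have "last (xs @ y # zs) = last ps" using ps by (cases zs) auto
    moreover have "set (xs @ y # zs) \<subseteq> set ps" using ps by auto
    ultimately show ?thesis using "1.IH" "1.prems"(1) by (smt (verit) order.trans less_imp_le)
  qed
qed

lemma walk_imp_U_path:
  assumes "walk G ps" "last ps \<in> U" "last ps \<noteq> hd ps"
  obtains qs where "walk G qs" "distinct qs" "hd qs = hd ps" "last qs \<in> U" "last qs \<noteq> hd ps"
    "set qs \<subseteq> set ps" "length qs \<le> length ps" "inner_verts qs \<inter> U = {}"
proof -
  obtain P where P: "walk G P" "distinct P" "hd P = hd ps" "last P = last ps" "set P \<subseteq> set ps"
    "length P \<le> length ps" using walk_imp_distinct_walk[OF assms(1)] by blast
  obtain u T where uT: "P = u # T" using P(1) by (cases P) auto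
  then have "T \<noteq> []" using P(3,4) assms(3) by auto
  then have "last P \<in> set T" using uT by simp
  then have "\<exists>x\<in>set T. x \<in> U" using P(4) assms(2) by auto
  then obtain xs y zs where T: "T = xs @ y # zs" "y \<in> U" "\<forall>x\<in>set xs. x \<notin> U"
    by (auto simp: split_list_first_prop_iff)
  define qs where "qs = u # xs @ [y]"
  have P_qs: "P = qs @ zs" unfolding qs_def using uT T by simp
  then have "walk G qs" "distinct qs" using P(1,2) walk_prefix[of G qs zs] unfolding qs_def by auto
  moreover have "inner_verts qs \<inter> U = {}" unfolding inner_verts_def qs_def using T(3) by auto
  moreover have "hd qs = hd ps" "last qs \<in> U" "last qs \<noteq> hd ps"
    using P(2,3) uT T unfolding qs_def by auto
  moreover have "set qs \<subseteq> set ps" "length qs \<le> length ps" using P(5,6) P_qs by auto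
  ultimately show ?thesis using that by blast
qed

lemma two_le_length_if_hd_neq_last: "xs \<noteq> [] \<Longrightarrow> hd xs \<noteq> last xs \<Longrightarrow> 2 \<le> length xs"
  by (cases xs; cases "tl xs") auto

lemma inner_verts_decomp:
  assumes "distinct P" "2 \<le> length P"
  shows "P = hd P # butlast (tl P) @ [last P]" "set (butlast (tl P)) = inner_verts P"
    "hd P \<noteq> last P"
proof -
  obtain a T' where "P = a # T'" using assms(2) by (cases P) auto
  moreover from this have "T' \<noteq> []" using assms(2) by auto
  ultimately obtain T b where P: "P = a # T @ [b]" by (metis append_butlast_last_id)
  then show "P = hd P # butlast (tl P) @ [last P]" by simp
  show "set (butlast (tl P)) = inner_verts P" "hd P \<noteq> last P"
    using assms(1) P unfolding inner_verts_def by auto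
qed

lemma finite_edges: "is_graph H \<Longrightarrow> finite (edges H)"
  unfolding is_graph_def by (rule finite_subset[of _ "Pow (verts H)"]) auto

lemma shallow_minorI:
  assumes "\<And>x. x \<in> verts H \<Longrightarrow> \<phi> x \<subseteq> verts G"
    and "\<And>x. x \<in> verts H \<Longrightarrow> \<exists>c\<in>\<phi> x. \<phi> x \<subseteq> nbhd (induce G (\<phi> x)) r c"
    and "\<And>x y. x \<in> verts H \<Longrightarrow> y \<in> verts H \<Longrightarrow> x \<noteq> y \<Longrightarrow> \<phi> x \<inter> \<phi> y = {}"
    and "\<And>x y. x \<in> verts H \<Longrightarrow> y \<in> verts H \<Longrightarrow> {x, y} \<in> edges H \<Longrightarrow>
      \<exists>u\<in>\<phi> x. \<exists>v\<in>\<phi> y. {u, v} \<in> edges G"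
  shows "shallow_minor r H G"
  unfolding shallow_minor_def using assms by (intro exI[of _ \<phi>]) blast

lemma card_le_card_if_disjoint_meets:
  assumes "finite S" "disjoint_family_on \<phi> A" "\<And>a. a \<in> A \<Longrightarrow> \<phi> a \<inter> S \<noteq> {}"
  shows "card A \<le> card S"
proof -
  define g where "g a = (SOME z. z \<in> \<phi> a \<inter> S)" for a
  have g: "g a \<in> \<phi> a \<inter> S" if "a \<in> A" for a
  proof -
    have "\<exists>z. z \<in> \<phi> a \<inter> S" using assms(3)[OF that] by blast
    then show ?thesis unfolding g_def by (rule someI_ex)
  qed
  have "inj_on g A"
  proof (rule inj_onI)
    fix a b assume "a \<in> A" "b \<in> A" "g a = g b"
    then have "\<phi> a \<inter> \<phi> b \<noteq> {}" using g by (metis IntD1 disjoint_iff)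
    then show "a = b" using assms(2) \<open>a \<in> A\<close> \<open>b \<in> A\<close> unfolding disjoint_family_on_def by blast
  qed
  then show ?thesis using card_inj_on_le[of g A S] g assms(1) by blast
qed

lemma large_independent_subset:
  assumes X: "finite X" and sym: "\<And>u w. adj u w \<Longrightarrow> adj w u"
    and deg: "\<And>u. u \<in> X \<Longrightarrow> card {w\<in>X. adj u w} \<le> D"
  obtains I where "I \<subseteq> X" "\<And>a b. a \<in> I \<Longrightarrow> b \<in> I \<Longrightarrow> adj a b \<Longrightarrow> a = b"
    "card X \<le> (D+1) * card I"
proof -
  let ?indep = "\<lambda>I. I \<subseteq> X \<and> (\<forall>a\<in>I. \<forall>b\<in>I. adj a b \<longrightarrow> a = b)"
  have "\<forall>J. ?indep J \<longrightarrow> card J < Suc (card X)" using X by (simp add: card_mono le_imp_less_Suc)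
  then obtain I where I: "?indep I" and max: "\<And>J. ?indep J \<Longrightarrow> card J \<le> card I"
    using Lattices_Big.ex_has_greatest_nat[of ?indep "{}" card "Suc (card X)"] by blast
  have fin_I: "finite I" using I X finite_subset by blast
  text \<open>A maximum independent set dominates \<open>X\<close>.\<close>
  have "X \<subseteq> (\<Union>a\<in>I. insert a {w\<in>X. adj a w})"
  proof
    fix x assume x: "x \<in> X"
    show "x \<in> (\<Union>a\<in>I. insert a {w\<in>X. adj a w})"
    proof (rule ccontr)
      assume "x \<notin> (\<Union>a\<in>I. insert a {w\<in>X. adj a w})"
      then have "x \<notin> I" "?indep (insert x I)" using I x sym by blast+
      then show False using max[of "insert x I"] fin_I by simp
    qed
  qed
  then have "card X \<le> card (\<Union>a\<in>I. insert a {w\<in>X. adj a w})"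
    using X fin_I by (intro card_mono) auto
  also have "\<dots> \<le> (\<Sum>a\<in>I. card (insert a {w\<in>X. adj a w}))" by (rule card_UN_le[OF fin_I])
  also have "\<dots> \<le> (\<Sum>a\<in>I. D + 1)"
  proof (rule sum_mono)
    fix a assume "a \<in> I"
    then show "card (insert a {w\<in>X. adj a w}) \<le> D + 1"
      using deg[of a] I X by (simp add: card_insert_if subset_iff)
  qed
  finally have "card X \<le> (D + 1) * card I" by (simp add: mult.commute)
  then show ?thesis using that I by blast
qed

lemma sum_card_nbrs_le:
  assumes H: "is_graph H"
  shows "(\<Sum>u\<in>verts H. card {w\<in>verts H. {u, w} \<in> edges H}) \<le> 2 * card (edges H)"
proof -
  have fin: "finite (verts H)" "finite (edges H)" using H finite_edges[OF H] unfolding is_graph_def by auto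
  have "card {w\<in>verts H. {u, w} \<in> edges H} \<le> card {e\<in>edges H. u \<in> e}" for u
  proof (rule card_inj_on_le)
    show "inj_on (\<lambda>w. {u, w}) {w\<in>verts H. {u, w} \<in> edges H}"
      by (rule inj_onI) (auto simp: doubleton_eq_iff)
  qed (use fin in auto)
  then have "(\<Sum>u\<in>verts H. card {w\<in>verts H. {u, w} \<in> edges H}) \<le> (\<Sum>u\<in>verts H. card {e\<in>edges H. u \<in> e})"
    by (rule sum_mono)
  also have "\<dots> = (\<Sum>e\<in>edges H. card {u\<in>verts H. u \<in> e})"
    by (rule sum_multicount_gen[OF fin]) simp
  also have "\<dots> \<le> (\<Sum>e\<in>edges H. 2)"
  proof (rule sum_mono)
    fix e assume "e \<in> edges H"
    then obtain a b where e: "e = {a, b}" using H unfolding is_graph_def by metis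
    have "card {u\<in>verts H. u \<in> e} \<le> card e" by (rule card_mono) (auto simp: e)
    also have "\<dots> \<le> 2" unfolding e by (simp add: card_insert_if)
    finally show "card {u\<in>verts H. u \<in> e} \<le> 2" .
  qed
  finally show ?thesis by (simp add: mult.commute)
qed

lemma card_edges_le_out_degree:
  assumes H: "is_graph H"
    and oriented: "\<And>a b. {a, b} \<in> edges H \<Longrightarrow> b \<in> out a \<or> a \<in> out b"
    and out: "\<And>x. x \<in> verts H \<Longrightarrow> out x \<subseteq> verts H \<and> card (out x) \<le> D"
  shows "card (edges H) \<le> D * card (verts H)"
proof -
  have fin: "finite (verts H)" using H unfolding is_graph_def by simp
  then have fin_out: "finite (out x)" if "x \<in> verts H" for x using out[OF that] finite_subset by blast
  have "edges H \<subseteq> (\<Union>x\<in>verts H. (\<lambda>y. {x, y}) ` out x)"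
  proof
    fix e assume "e \<in> edges H"
    then obtain a b where "e = {a, b}" "a \<in> verts H" "b \<in> verts H"
      using H unfolding is_graph_def by blast
    moreover have "b \<in> out a \<or> a \<in> out b" using oriented \<open>e \<in> edges H\<close> \<open>e = {a, b}\<close> by blast
    ultimately show "e \<in> (\<Union>x\<in>verts H. (\<lambda>y. {x, y}) ` out x)" by (auto simp: insert_commute)
  qed
  then have "card (edges H) \<le> card (\<Union>x\<in>verts H. (\<lambda>y. {x, y}) ` out x)"
    using fin fin_out by (intro card_mono) auto
  also have "\<dots> \<le> (\<Sum>x\<in>verts H. card ((\<lambda>y. {x, y}) ` out x))" by (rule card_UN_le[OF fin])
  also have "\<dots> \<le> (\<Sum>x\<in>verts H. card (out x))" by (intro sum_mono card_image_le fin_out)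
  also have "\<dots> \<le> (\<Sum>x\<in>verts H. D)" using out by (intro sum_mono) blast
  finally show ?thesis by (simp add: mult.commute)
qed

section \<open>Finite ranks bound the density of shallow minors\<close>

lemma ranked_verts: "ranked G r m i \<subseteq> verts G"
  by (induction i) auto

lemma rank_finite_iff: "rank G r m v \<noteq> \<infinity> \<longleftrightarrow> (\<exists>i. v \<in> ranked G r m i)"
  by (simp add: rank_def)

lemma rank_le: "v \<in> ranked G r m i \<Longrightarrow> rank G r m v \<le> enat i"
  unfolding rank_def by (auto intro: Least_le)

lemma rank_separator_exists:
  assumes "v \<in> ranked G r m i"
  shows "\<exists>S. S \<subseteq> verts G - {v} \<and> card S \<le> m \<and>
     (\<forall>z \<in> nbhd (delete_verts G S) r v - {v}. rank G r m z < rank G r m v)"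
proof -
  define k where "k = (LEAST i. v \<in> ranked G r m i)"
  have v_k: "v \<in> ranked G r m k" unfolding k_def using assms by (rule LeastI)
  then obtain j where j: "k = Suc j" by (cases k) auto
  have "v \<notin> ranked G r m j" using j unfolding k_def by (metis lessI not_less_Least)
  then obtain S where S: "S \<subseteq> verts G - {v}" "card S \<le> m"
    "nbhd (delete_verts G S) r v - {v} \<subseteq> ranked G r m j" using v_k j by auto
  have "rank G r m v = enat (Suc j)" using assms j unfolding rank_def k_def by auto
  then have "rank G r m z < rank G r m v" if "z \<in> ranked G r m j" for z
    using rank_le[OF that] by (simp add: le_less_trans)
  then show ?thesis using S by blast
qed

fun reach :: "('a \<Rightarrow> 'a set) \<Rightarrow> nat \<Rightarrow> 'a \<Rightarrow> 'a set" where
  "reach F 0 v = {v}"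
| "reach F (Suc k) v = insert v (\<Union>u\<in>F v. reach F k u)"

lemma reach_self: "v \<in> reach F k v"
  by (cases k) auto

lemma reach_Suc_mono: "reach F k v \<subseteq> reach F (Suc k) v"
  by (induction k arbitrary: v) auto

lemma reach_mono: "k \<le> k' \<Longrightarrow> reach F k v \<subseteq> reach F k' v"
  by (rule lift_Suc_mono_le[of "\<lambda>k. reach F k v"]) (rule reach_Suc_mono)

lemma reach_step: "u \<in> F v \<Longrightarrow> reach F k u \<subseteq> reach F (Suc k) v"
  by auto

lemma card_reach_le:
  assumes "\<And>u. u \<in> A \<Longrightarrow> F u \<subseteq> A \<and> finite (F u) \<and> card (F u) \<le> m" "v \<in> A"
  shows "finite (reach F k v) \<and> card (reach F k v) \<le> (m+1)^k"
  using assms(2)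
proof (induction k arbitrary: v)
  case (Suc k)
  have F: "F v \<subseteq> A" "finite (F v)" "card (F v) \<le> m" using assms(1) Suc.prems by auto
  then have IH: "finite (reach F k u)" "card (reach F k u) \<le> (m+1)^k" if "u \<in> F v" for u
    using Suc.IH that by auto
  have "card (\<Union>u\<in>F v. reach F k u) \<le> (\<Sum>u\<in>F v. card (reach F k u))"
    by (rule card_UN_le[OF F(2)])
  also have "\<dots> \<le> card (F v) * (m+1)^k"
    using sum_bounded_above[of "F v" "\<lambda>u. card (reach F k u)", OF IH(2)] by simp
  also have "\<dots> \<le> m * (m+1)^k" using F(3) by simp
  finally have "card (\<Union>u\<in>F v. reach F k u) \<le> m * (m+1)^k" .
  moreover have "finite (\<Union>u\<in>F v. reach F k u)" using F(2) IH(1) by blast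
  ultimately have "card (reach F (Suc k) v) \<le> Suc (m * (m+1)^k)"
    using card_insert_le_m1 by (simp add: card_insert_if)
  also have "\<dots> \<le> (m+1)^Suc k" by simp
  finally show ?case using \<open>finite (\<Union>u\<in>F v. reach F k u)\<close> by simp
qed simp

lemma reach_mono_step:
  assumes "z = v \<or> z \<in> F v" "Suc k \<le> k'"
  shows "reach F k z \<subseteq> reach F k' v"
  using assms(1)
proof
  assume "z = v"
  then show ?thesis using reach_mono[of k k' F v] assms(2) by simp
next
  assume "z \<in> F v"
  then show ?thesis using reach_step[of z F v k] reach_mono[OF assms(2), of F v] by blast
qed

lemma separator_exit:
  fixes \<rho> :: "'a \<Rightarrow> 'b::linorder"
  assumes "v \<notin> S" and sep: "\<And>z. z \<in> nbhd (delete_verts G S) R v \<Longrightarrow> z \<noteq> v \<Longrightarrow> \<rho> z < \<rho> v"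
    and "walk G (v # xs @ [z])" "length (v # xs @ [z]) \<le> Suc R" "set xs \<inter> S = {}" "\<rho> v \<le> \<rho> z"
  shows "z = v \<or> z \<in> S"
proof (rule ccontr)
  assume z: "\<not> (z = v \<or> z \<in> S)"
  then have "walk (delete_verts G S) (v # xs @ [z])"
    unfolding walk_delete_verts using assms(1,3,5) by auto
  from walk_last_in_nbhd[OF this assms(4)] have "z \<in> nbhd (delete_verts G S) R v" by simp
  then have "\<rho> z < \<rho> v" using sep z by blast
  then show False using assms(6) by simp
qed

text \<open>A walk whose vertices outside \<open>Y\<close> have rank at most that of its endpoint can leave the
  separated ball around its start only through the separator or by returning to the start, so we
  may continue from there; hence the separators lead from its start into \<open>Y\<close>.\<close>

lemma reach_separators_meets:
  fixes \<rho> :: "'a \<Rightarrow> 'b::linorder"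
  assumes not_in_sep: "\<And>v. v \<in> verts G \<Longrightarrow> v \<notin> F v"
    and sep: "\<And>v z. v \<in> verts G \<Longrightarrow> z \<in> nbhd (delete_verts G (F v)) R v \<Longrightarrow> z \<noteq> v \<Longrightarrow> \<rho> z < \<rho> v"
  shows "walk G ps \<Longrightarrow> length ps \<le> Suc R \<Longrightarrow> last ps \<in> Y \<Longrightarrow>
    \<forall>z\<in>set ps. z \<notin> Y \<longrightarrow> \<rho> z \<le> \<rho> (last ps) \<Longrightarrow> reach F (length ps - 1) (hd ps) \<inter> Y \<noteq> {}"
proof (induction ps rule: length_induct)
  case (1 ps)
  obtain v T where ps: "ps = v # T" using "1.prems"(1) by (cases ps) auto
  show ?case
  proof (cases "v \<in> Y")
    case True
    then have "v \<in> reach F (length ps - 1) (hd ps) \<inter> Y" using ps reach_self by simp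
    then show ?thesis by blast
  next
    case False
    then have "T \<noteq> []" using ps "1.prems"(3) by auto
    have v: "v \<in> verts G" using "1.prems"(1) ps walk_verts by fastforce
    have "last ps \<in> set T" "\<rho> v \<le> \<rho> (last ps)"
      using \<open>T \<noteq> []\<close> ps "1.prems"(4) False by auto
    then have "\<exists>x\<in>set T. x \<in> F v \<or> \<rho> v \<le> \<rho> x" by blast
    then obtain xs z zs where T: "T = xs @ z # zs" "z \<in> F v \<or> \<rho> v \<le> \<rho> z" "\<forall>x\<in>set xs. x \<notin> F v"
      by (auto simp: split_list_first_prop_iff)
    have "walk G (v # xs @ [z])" "length (v # xs @ [z]) \<le> Suc R"
      using "1.prems"(1,2) ps T walk_prefix[of G "v # xs @ [z]" zs] by auto
    then have z: "z = v \<or> z \<in> F v"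
      using separator_exit[of v "F v" G R \<rho>, OF not_in_sep[OF v] sep[OF v]] T(2,3) by blast
    have "walk G (z # zs)" using "1.prems"(1) ps T walk_suffix[of G "v # xs" "z # zs"] by simp
    moreover have "length (z # zs) < length ps" "length (z # zs) \<le> Suc R" "last (z # zs) \<in> Y"
      "\<forall>x\<in>set (z # zs). x \<notin> Y \<longrightarrow> \<rho> x \<le> \<rho> (last (z # zs))"
      using "1.prems"(2-4) ps T by auto
    ultimately have "reach F (length zs) z \<inter> Y \<noteq> {}"
      using "1.IH" by (metis diff_Suc_1 length_Cons list.sel(1))
    moreover have "reach F (length zs) z \<subseteq> reach F (length ps - 1) v"
      by (rule reach_mono_step[where F = F, OF z]) (use ps T in simp)
    ultimately show ?thesis using ps by auto
  qed
qed

lemma rank_separators: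
  assumes "\<forall>v\<in>verts G. rank G R m v \<noteq> \<infinity>"
  obtains F where "\<And>v. v \<in> verts G \<Longrightarrow> F v \<subseteq> verts G - {v}" "\<And>v. v \<in> verts G \<Longrightarrow> card (F v) \<le> m"
    "\<And>v z. v \<in> verts G \<Longrightarrow> z \<in> nbhd (delete_verts G (F v)) R v \<Longrightarrow> z \<noteq> v \<Longrightarrow>
      rank G R m z < rank G R m v"
proof -
  have "\<forall>v\<in>verts G. \<exists>S. S \<subseteq> verts G - {v} \<and> card S \<le> m \<and>
      (\<forall>z \<in> nbhd (delete_verts G S) R v - {v}. rank G R m z < rank G R m v)"
    using assms rank_separator_exists unfolding rank_finite_iff by metis
  then show ?thesis using that by (metis Diff_iff singletonD)
qed

lemma finite_has_max_image:
  fixes f :: "'a \<Rightarrow> 'b::linorder"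
  assumes "finite A" "A \<noteq> {}"
  obtains w where "w \<in> A" "\<And>y. y \<in> A \<Longrightarrow> f y \<le> f w"
proof -
  have "Max (f ` A) \<in> f ` A" using assms by simp
  then obtain w where "w \<in> A" "f w = Max (f ` A)" by (metis imageE)
  moreover have "f y \<le> Max (f ` A)" if "y \<in> A" for y using assms that by simp
  ultimately show ?thesis using that by simp
qed

text \<open>Joining the top vertex \<open>a\<close> of one branch set to the top vertex \<open>b\<close> of an adjacent one through
  the two branch sets gives a walk of length at most \<open>4 r + 2\<close> whose vertices outside the second branch
  set have rank at most \<open>\<rho> a \<le> \<rho> b\<close>.\<close>

lemma reach_separators_meets_branch:
  fixes \<rho> :: "'a \<Rightarrow> 'b::linorder"
  assumes not_in_sep: "\<And>v. v \<in> verts G \<Longrightarrow> v \<notin> F v"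
    and sep: "\<And>v z. v \<in> verts G \<Longrightarrow> z \<in> nbhd (delete_verts G (F v)) R v \<Longrightarrow> z \<noteq> v \<Longrightarrow> \<rho> z < \<rho> v"
    and A: "A \<subseteq> verts G" "\<exists>c\<in>A. A \<subseteq> nbhd (induce G A) r c"
    and B: "B \<subseteq> verts G" "\<exists>c\<in>B. B \<subseteq> nbhd (induce G B) r c"
    and a: "a \<in> A" "\<And>z. z \<in> A \<Longrightarrow> \<rho> z \<le> \<rho> a" and b: "b \<in> B" "\<rho> a \<le> \<rho> b"
    and edge: "u \<in> A" "w \<in> B" "{u, w} \<in> edges G" and R: "4*r+1 \<le> R"
  shows "reach F R a \<inter> B \<noteq> {}"
proof -
  obtain p where p: "walk G p" "hd p = a" "last p = u" "set p \<subseteq> A" "length p \<le> 2*r+1"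
    using walk_in_radius[of A G _ r a u] A a(1) edge(1) by blast
  obtain q where q: "walk G q" "hd q = w" "last q = b" "set q \<subseteq> B" "length q \<le> 2*r+1"
    using walk_in_radius[of B G _ r w b] B b(1) edge(2) by blast
  have "p \<noteq> []" "q \<noteq> []" using p(1) q(1) by auto
  then have "walk G (p @ q)" "hd (p @ q) = a" "last (p @ q) = b" "length (p @ q) \<le> Suc R"
    using walk_append[of p q G] p q edge(3) R by auto
  moreover have "\<forall>z\<in>set (p @ q). z \<notin> B \<longrightarrow> \<rho> z \<le> \<rho> (last (p @ q))"
    using p(4) q(4) a(2) b(2) calculation(3) by (auto intro: order.trans)
  ultimately have "reach F (length (p @ q) - 1) a \<inter> B \<noteq> {}"
    using reach_separators_meets[of G F R \<rho> "p @ q" B, OF not_in_sep sep] b(1) by fastforce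
  moreover have "reach F (length (p @ q) - 1) a \<subseteq> reach F R a"
    by (rule reach_mono) (use \<open>length (p @ q) \<le> Suc R\<close> in simp)
  ultimately show ?thesis by blast
qed

text \<open>Orient each edge of \<open>H\<close> towards the branch set whose top vertex has larger rank. The separators
  lead from the top vertex \<open>M x\<close> into the pairwise disjoint branch sets of all out-neighbours of \<open>x\<close>,
  so the out-degree of \<open>x\<close> is at most the size \<open>(m + 1)^(4 r + 1)\<close> of \<open>reach\<close>.\<close>

lemma shallow_minor_density_if_ranked:
  fixes G :: "'a graph" and H :: "'b graph"
  assumes G: "is_graph G" and ranked: "\<forall>v\<in>verts G. rank G (4*r+1) m v \<noteq> \<infinity>"
    and H: "is_graph H" and minor: "shallow_minor r H G"
  shows "card (edges H) \<le> (m+1)^(4*r+1) * card (verts H)"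
proof -
  define R where "R = 4*r+1"
  then have R_le: "4*r+1 \<le> R" by simp
  let ?\<rho> = "rank G R m"
  obtain F where F: "\<And>v. v \<in> verts G \<Longrightarrow> F v \<subseteq> verts G - {v}" "\<And>v. v \<in> verts G \<Longrightarrow> card (F v) \<le> m"
    "\<And>v z. v \<in> verts G \<Longrightarrow> z \<in> nbhd (delete_verts G (F v)) R v \<Longrightarrow> z \<noteq> v \<Longrightarrow> ?\<rho> z < ?\<rho> v"
    using rank_separators ranked unfolding R_def by blast
  obtain \<phi> :: "'b \<Rightarrow> 'a set" where
    \<phi>_verts: "\<forall>x\<in>verts H. \<phi> x \<subseteq> verts G \<and> (\<exists>c\<in>\<phi> x. \<phi> x \<subseteq> nbhd (induce G (\<phi> x)) r c)" and
    \<phi>_disj: "\<forall>x\<in>verts H. \<forall>y\<in>verts H. x \<noteq> y \<longrightarrow> \<phi> x \<inter> \<phi> y = {}" and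
    \<phi>_edges: "\<forall>x\<in>verts H. \<forall>y\<in>verts H. {x, y} \<in> edges H \<longrightarrow> (\<exists>u\<in>\<phi> x. \<exists>v\<in>\<phi> y. {u, v} \<in> edges G)"
    using minor unfolding shallow_minor_def by blast
  have fin_G: "finite (verts G)" using G unfolding is_graph_def by simp
  have "\<exists>w. w \<in> \<phi> x \<and> (\<forall>y\<in>\<phi> x. ?\<rho> y \<le> ?\<rho> w)" if "x \<in> verts H" for x
  proof -
    have "finite (\<phi> x)" "\<phi> x \<noteq> {}" using bspec[OF \<phi>_verts that] fin_G finite_subset by auto
    then obtain w where "w \<in> \<phi> x" "\<And>y. y \<in> \<phi> x \<Longrightarrow> ?\<rho> y \<le> ?\<rho> w"
      by (rule finite_has_max_image[where f = ?\<rho>]) blast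
    then show ?thesis by blast
  qed
  then obtain M where M: "\<And>x. x \<in> verts H \<Longrightarrow> M x \<in> \<phi> x \<and> (\<forall>y\<in>\<phi> x. ?\<rho> y \<le> ?\<rho> (M x))"
    using bchoice[of "verts H" "\<lambda>x w. w \<in> \<phi> x \<and> (\<forall>y\<in>\<phi> x. ?\<rho> y \<le> ?\<rho> w)"] by blast
  define out where "out x = {y \<in> verts H. {x, y} \<in> edges H \<and> ?\<rho> (M x) \<le> ?\<rho> (M y)}" for x
  have "card (out x) \<le> (m+1)^R" if x: "x \<in> verts H" for x
  proof -
    have "M x \<in> verts G" using M[OF x] bspec[OF \<phi>_verts x] by blast
    moreover have "F u \<subseteq> verts G \<and> finite (F u) \<and> card (F u) \<le> m" if "u \<in> verts G" for u
      using F(1,2)[OF that] fin_G by (auto intro: finite_subset)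
    ultimately have "finite (reach F R (M x))" "card (reach F R (M x)) \<le> (m+1)^R"
      using card_reach_le[of "verts G" F m] by blast+
    moreover have "disjoint_family_on \<phi> (out x)"
      using \<phi>_disj unfolding out_def disjoint_family_on_def by auto
    moreover have "reach F R (M x) \<inter> \<phi> y \<noteq> {}" if "y \<in> out x" for y
    proof -
      have y: "y \<in> verts H" "{x, y} \<in> edges H" "?\<rho> (M x) \<le> ?\<rho> (M y)" using that unfolding out_def by auto
      then obtain u w where uw: "u \<in> \<phi> x" "w \<in> \<phi> y" "{u, w} \<in> edges G" using \<phi>_edges x by blast
      have not_in_sep: "\<And>v. v \<in> verts G \<Longrightarrow> v \<notin> F v" using F(1) by blast
      have top: "\<And>z. z \<in> \<phi> x \<Longrightarrow> ?\<rho> z \<le> ?\<rho> (M x)" using M[OF x] by blast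
      note Bx = bspec[OF \<phi>_verts x] and By = bspec[OF \<phi>_verts y(1)]
      show ?thesis
        by (rule reach_separators_meets_branch[OF not_in_sep F(3) conjunct1[OF Bx] conjunct2[OF Bx]
              conjunct1[OF By] conjunct2[OF By] conjunct1[OF M[OF x]] top conjunct1[OF M[OF y(1)]]
              y(3) uw R_le])
    qed
    ultimately have "card (out x) \<le> card (reach F R (M x))"
      using card_le_card_if_disjoint_meets[of _ \<phi> "out x"] by (simp add: Int_commute)
    then show ?thesis using \<open>card (reach F R (M x)) \<le> (m+1)^R\<close> by linarith
  qed
  moreover have "{a, b} \<in> edges H \<Longrightarrow> b \<in> out a \<or> a \<in> out b" for a b
    using H unfolding out_def is_graph_def by (auto simp: doubleton_eq_iff insert_commute)
  ultimately show ?thesis unfolding R_def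
    using card_edges_le_out_degree[OF H, of out] unfolding out_def by blast
qed

section \<open>Fans around unranked vertices\<close>

lemma ranked_stabilizes:
  assumes "finite (verts G)"
  obtains i where "ranked G r m (Suc i) = ranked G r m i"
proof -
  have "card (ranked G r m i) \<le> card (verts G)" for i
    using assms ranked_verts by (rule card_mono)
  moreover have "i \<le> card (ranked G r m i)" if "\<And>j. ranked G r m (Suc j) \<noteq> ranked G r m j" for i
  proof (induction i)
    case (Suc i)
    have "ranked G r m i \<subset> ranked G r m (Suc i)" using that[of i] by auto
    then have "card (ranked G r m i) < card (ranked G r m (Suc i))"
      using assms ranked_verts finite_subset psubset_card_mono by metis
    then show ?case using Suc.IH by simp
  qed simp
  ultimately show ?thesis using that by (meson le_trans not_less_eq_eq)
qed

lemma unranked_core: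
  assumes "finite (verts G)" "v \<in> verts G" "rank G r m v = \<infinity>"
  obtains U where "U \<subseteq> verts G" "v \<in> U"
    "\<And>u S. u \<in> U \<Longrightarrow> S \<subseteq> verts G - {u} \<Longrightarrow> card S \<le> m \<Longrightarrow>
      \<exists>w\<in>U. w \<noteq> u \<and> w \<in> nbhd (delete_verts G S) r u"
proof -
  obtain i where i: "ranked G r m (Suc i) = ranked G r m i" using ranked_stabilizes[OF assms(1)] by blast
  define U where "U = verts G - ranked G r m i"
  have "\<exists>w\<in>U. w \<noteq> u \<and> w \<in> nbhd (delete_verts G S) r u"
    if u: "u \<in> U" and S: "S \<subseteq> verts G - {u}" "card S \<le> m" for u S
  proof -
    have "u \<notin> ranked G r m (Suc i)" "u \<in> verts G" using u i unfolding U_def by auto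
    then obtain w where w: "w \<in> nbhd (delete_verts G S) r u" "w \<noteq> u" "w \<notin> ranked G r m i"
      using S by auto
    then have "w \<in> verts G" using nbhd_verts[OF w(1)] unfolding delete_verts_def by simp
    then show ?thesis using w unfolding U_def by blast
  qed
  moreover have "v \<in> U" using assms(2,3) rank_finite_iff[of G r m v] unfolding U_def by auto
  ultimately show ?thesis using that unfolding U_def by blast
qed

definition fan_path :: "'a graph \<Rightarrow> 'a set \<Rightarrow> nat \<Rightarrow> 'a \<Rightarrow> 'a list \<Rightarrow> bool" where
  "fan_path G U r u P \<longleftrightarrow> walk G P \<and> distinct P \<and> hd P = u \<and> last P \<in> U \<and> last P \<noteq> u \<and>
     length P \<le> Suc r \<and> inner_verts P \<inter> U = {}"

definition fan :: "'a graph \<Rightarrow> 'a set \<Rightarrow> nat \<Rightarrow> 'a \<Rightarrow> 'a list set \<Rightarrow> bool" where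
  "fan G U r u Fs \<longleftrightarrow> (\<forall>P\<in>Fs. fan_path G U r u P) \<and> disjoint_family_on (\<lambda>P. set (tl P)) Fs"

lemma fan_path_tl_ne: "fan_path G U r u P \<Longrightarrow> tl P \<noteq> []"
  unfolding fan_path_def by (cases P) auto

lemma finite_fan:
  assumes "finite (verts G)" "fan G U r u Fs"
  shows "finite Fs"
proof -
  have "Fs \<subseteq> {P. set P \<subseteq> verts G \<and> length P \<le> Suc r}"
    using assms(2) walk_verts unfolding fan_def fan_path_def by blast
  then show ?thesis using finite_lists_length_le[OF assms(1)] finite_subset by blast
qed

lemma fan_tails:
  assumes "fan G U r u Fs" "finite Fs"
  shows "(\<Union>P\<in>Fs. set (tl P)) \<subseteq> verts G - {u}" "card (\<Union>P\<in>Fs. set (tl P)) \<le> r * card Fs"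
proof -
  have paths: "fan_path G U r u P" if "P \<in> Fs" for P using assms(1) that by (simp add: fan_def)
  show "(\<Union>P\<in>Fs. set (tl P)) \<subseteq> verts G - {u}"
  proof
    fix z assume "z \<in> (\<Union>P\<in>Fs. set (tl P))"
    then obtain P where P: "P \<in> Fs" "z \<in> set (tl P)" by blast
    then obtain T where "P = u # T" "walk G P" "distinct P"
      using paths[OF P(1)] unfolding fan_path_def by (cases P) auto
    then show "z \<in> verts G - {u}" using P(2) walk_verts by fastforce
  qed
  have "card (\<Union>P\<in>Fs. set (tl P)) \<le> (\<Sum>P\<in>Fs. card (set (tl P)))" by (rule card_UN_le[OF assms(2)])
  also have "\<dots> \<le> (\<Sum>P\<in>Fs. r)"
  proof (rule sum_mono)
    fix P assume "P \<in> Fs"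
    then have "length P \<le> Suc r" using paths unfolding fan_path_def by blast
    then show "card (set (tl P)) \<le> r" using card_length[of "tl P"] by simp
  qed
  finally show "card (\<Union>P\<in>Fs. set (tl P)) \<le> r * card Fs" by (simp add: mult.commute)
qed

lemma fan_path_avoiding:
  assumes "U \<subseteq> verts G" "u \<in> U" "S \<subseteq> verts G - {u}"
    and w: "w \<in> U" "w \<noteq> u" "w \<in> nbhd (delete_verts G S) r u"
  obtains P where "fan_path G U r u P" "set (tl P) \<inter> S = {}"
proof -
  have "u \<in> verts (delete_verts G S)"
    using assms(1-3) unfolding delete_verts_def by auto
  then obtain ps where ps: "walk (delete_verts G S) ps" "hd ps = u" "last ps = w" "length ps \<le> Suc r"
    using nbhd_imp_walk w(3) by metis
  from ps(1) have "walk G ps" "set ps \<inter> S = {}" unfolding walk_delete_verts by simp_all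
  moreover have "last ps \<in> U" "last ps \<noteq> hd ps" using ps(2,3) w(1,2) by auto
  ultimately obtain P where P: "walk G P" "distinct P" "hd P = hd ps" "last P \<in> U" "last P \<noteq> hd ps"
    "set P \<subseteq> set ps" "length P \<le> length ps" "inner_verts P \<inter> U = {}"
    using walk_imp_U_path[of G ps U] by blast
  then have "fan_path G U r u P" unfolding fan_path_def using ps(2,4) by auto
  moreover have "set (tl P) \<inter> S = {}"
    using P(6) \<open>set ps \<inter> S = {}\<close> by (cases P) auto
  ultimately show ?thesis using that by blast
qed

text \<open>While \<open>r |Fs| \<le> m\<close>, the tails of the fan form a set of at most \<open>m\<close> vertices, which cannot cut
  \<open>u\<close> off from the rest of \<open>U\<close> within distance \<open>r\<close>; a shortest way around it is a new fan path.\<close>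

lemma fan_extend:
  assumes U: "U \<subseteq> verts G" "u \<in> U"
    and stall: "\<And>S. S \<subseteq> verts G - {u} \<Longrightarrow> card S \<le> m \<Longrightarrow>
      \<exists>w\<in>U. w \<noteq> u \<and> w \<in> nbhd (delete_verts G S) r u"
    and Fs: "fan G U r u Fs" "finite Fs" "r * card Fs \<le> m"
  obtains P where "P \<notin> Fs" "fan G U r u (insert P Fs)"
proof -
  define S where "S = (\<Union>P\<in>Fs. set (tl P))"
  have "S \<subseteq> verts G - {u}" "card S \<le> m" using fan_tails[OF Fs(1,2)] Fs(3) unfolding S_def by auto
  then obtain w where "w \<in> U" "w \<noteq> u" "w \<in> nbhd (delete_verts G S) r u" using stall by blast
  then obtain P where P: "fan_path G U r u P" "set (tl P) \<inter> S = {}"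
    using fan_path_avoiding[OF U \<open>S \<subseteq> verts G - {u}\<close>] by blast
  moreover have "P \<notin> Fs"
  proof
    assume "P \<in> Fs"
    then have "set (tl P) \<subseteq> S" unfolding S_def by blast
    then show False using P(2) fan_path_tl_ne[OF P(1)] by (cases "tl P") auto
  qed
  ultimately have "fan G U r u (insert P Fs)"
    using Fs(1) unfolding fan_def S_def by (simp add: disjoint_family_on_insert)
  then show ?thesis using that \<open>P \<notin> Fs\<close> by blast
qed

lemma fan_exists:
  assumes "U \<subseteq> verts G" "u \<in> U" "finite (verts G)"
    and "\<And>S. S \<subseteq> verts G - {u} \<Longrightarrow> card S \<le> m \<Longrightarrow>
      \<exists>w\<in>U. w \<noteq> u \<and> w \<in> nbhd (delete_verts G S) r u"
    and "r * k \<le> m"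
  shows "\<exists>Fs. fan G U r u Fs \<and> card Fs = k"
  using assms(5)
proof (induction k)
  case 0
  then show ?case by (intro exI[of _ "{}"]) (simp add: fan_def disjoint_family_on_def)
next
  case (Suc k)
  then have "r * k \<le> m" by simp
  then obtain Fs where Fs: "fan G U r u Fs" "card Fs = k" using Suc.IH by blast
  moreover have "finite Fs" using finite_fan[OF assms(3) Fs(1)] .
  moreover have "r * card Fs \<le> m" using \<open>r * k \<le> m\<close> Fs(2) by simp
  ultimately obtain P where "P \<notin> Fs" "fan G U r u (insert P Fs)"
    using fan_extend[OF assms(1,2,4)] by blast
  then show ?case using Fs \<open>finite Fs\<close> by (intro exI[of _ "insert P Fs"]) simp
qed

section \<open>Sparse shallow minors bound the size of fans\<close>

locale fans_in_sparse_graph =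
  fixes G :: "'a graph" and U :: "'a set" and r C d :: nat and Fan :: "'a \<Rightarrow> 'a list set"
  assumes graph: "is_graph G" and U_verts: "U \<subseteq> verts G" and U_nonempty: "U \<noteq> {}"
    and fan_Fan: "\<And>u. u \<in> U \<Longrightarrow> fan G U r u (Fan u)"
    and card_Fan: "\<And>u. u \<in> U \<Longrightarrow> card (Fan u) = d"
    and sparse: "\<And>H :: 'a graph. is_graph H \<Longrightarrow> shallow_minor (2*r) H G \<Longrightarrow>
      card (edges H) \<le> C * card (verts H)"
begin

lemma finite_verts: "finite (verts G)"
  using graph unfolding is_graph_def by simp

lemma finite_U: "finite U"
  using finite_verts U_verts finite_subset by blast

definition U_path :: "'a list \<Rightarrow> bool" where
  "U_path P \<longleftrightarrow> walk G P \<and> distinct P \<and> 2 \<le> length P \<and> length P \<le> 2*r+1 \<and>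
     hd P \<in> U \<and> last P \<in> U \<and> inner_verts P \<inter> U = {}"

definition ends :: "'a list \<Rightarrow> 'a set" where
  "ends P = {hd P, last P}"

definition path_packing :: "'a list set \<Rightarrow> bool" where
  "path_packing PS \<longleftrightarrow> (\<forall>P\<in>PS. U_path P) \<and> disjoint_family_on inner_verts PS \<and> inj_on ends PS"

lemma U_path_lists: "{P. U_path P} \<subseteq> {P. set P \<subseteq> verts G \<and> length P \<le> 2*r+1}"
  unfolding U_path_def using walk_verts by blast

lemma finite_U_paths: "finite {P. U_path P}"
  using finite_lists_length_le[OF finite_verts] U_path_lists finite_subset by blast

lemma max_path_packing_exists:
  "\<exists>PS. path_packing PS \<and> (\<forall>QS. path_packing QS \<longrightarrow> card QS \<le> card PS)"
proof -
  have "path_packing {}" unfolding path_packing_def disjoint_family_on_def by simp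
  moreover have "card QS < Suc (card {P. U_path P})" if "path_packing QS" for QS
    using that finite_U_paths card_mono[of "{P. U_path P}" QS] unfolding path_packing_def by fastforce
  ultimately show ?thesis using Lattices_Big.ex_has_greatest_nat[of path_packing "{}" card] by blast
qed

definition packing :: "'a list set" where
  "packing = (SOME PS. path_packing PS \<and> (\<forall>QS. path_packing QS \<longrightarrow> card QS \<le> card PS))"

lemma packing: "path_packing packing" "\<And>QS. path_packing QS \<Longrightarrow> card QS \<le> card packing"
  using someI_ex[OF max_path_packing_exists] unfolding packing_def by blast+

lemma U_path_packing: "P \<in> packing \<Longrightarrow> U_path P"
  using packing(1) unfolding path_packing_def by blast

lemma finite_packing: "finite packing"
  by (rule finite_subset[OF _ finite_U_paths]) (use U_path_packing in blast)

lemma packing_disjoint: "P \<in> packing \<Longrightarrow> Q \<in> packing \<Longrightarrow> P \<noteq> Q \<Longrightarrow> inner_verts P \<inter> inner_verts Q = {}"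
  using packing(1) unfolding path_packing_def disjoint_family_on_def by blast

lemma inj_on_ends_packing: "inj_on ends packing"
  using packing(1) unfolding path_packing_def by blast

definition packed :: "'a set" where
  "packed = (\<Union>P\<in>packing. inner_verts P)"

definition packing_edges :: "'a set set" where
  "packing_edges = ends ` packing"

lemma inner_verts_packing_not_U: "Q \<in> packing \<Longrightarrow> inner_verts Q \<inter> U = {}"
  using U_path_packing unfolding U_path_def by blast

lemma packed_not_U: "packed \<inter> U = {}"
  using inner_verts_packing_not_U unfolding packed_def by blast

lemma packing_maximal:
  assumes "U_path P" "inner_verts P \<inter> packed = {}"
  shows "ends P \<in> packing_edges"
proof (rule ccontr)
  assume new: "ends P \<notin> packing_edges"
  then have "P \<notin> packing" unfolding packing_edges_def by blast
  moreover have "inner_verts P \<inter> (\<Union>Q\<in>packing. inner_verts Q) = {}" using assms(2) unfolding packed_def .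
  moreover have "ends P \<notin> ends ` packing" using new unfolding packing_edges_def .
  ultimately have "path_packing (insert P packing)"
    using packing(1) assms(1) unfolding path_packing_def by (simp add: disjoint_family_on_insert)
  then have "card (insert P packing) \<le> card packing" by (rule packing(2))
  then show False using finite_packing \<open>P \<notin> packing\<close> by simp
qed

definition packing_branch :: "'a \<Rightarrow> 'a set" where
  "packing_branch u = insert u (\<Union>P\<in>{P\<in>packing. hd P = u}. inner_verts P)"

definition packing_graph :: "'a graph" where
  "packing_graph = (U, packing_edges)"

lemma verts_packing_graph [simp]: "verts packing_graph = U"
  unfolding packing_graph_def verts_def by simp

lemma edges_packing_graph [simp]: "edges packing_graph = packing_edges"
  unfolding packing_graph_def edges_def by simp

lemma U_path_ends:
  assumes "U_path P"
  shows "hd P \<noteq> last P" "hd P \<in> U" "last P \<in> U"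
  using assms inner_verts_decomp(3)[of P] unfolding U_path_def by auto

lemma is_graph_packing_graph: "is_graph packing_graph"
  unfolding is_graph_def
proof (intro conjI ballI)
  show "finite (verts packing_graph)" using finite_U by simp
next
  fix e assume "e \<in> edges packing_graph"
  then obtain P where P: "P \<in> packing" "e = {hd P, last P}"
    by (auto simp: packing_edges_def ends_def)
  with U_path_ends[OF U_path_packing[OF P(1)]]
  show "\<exists>u v. e = {u, v} \<and> u \<noteq> v \<and> u \<in> verts packing_graph \<and> v \<in> verts packing_graph"
    by (intro exI[of _ "hd P"] exI[of _ "last P"]) simp
qed

lemma U_path_butlast:
  assumes "U_path P"
  shows "walk G (butlast P)" "hd (butlast P) = hd P" "set (butlast P) = insert (hd P) (inner_verts P)"
    "length (butlast P) \<le> Suc (2*r)" "{last (butlast P), last P} \<in> edges G"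
proof -
  have P: "walk G P" "distinct P" "2 \<le> length P" "length P \<le> 2*r+1" using assms unfolding U_path_def by auto
  then have decomp: "P = (hd P # butlast (tl P)) @ [last P]" "set (butlast (tl P)) = inner_verts P"
    using inner_verts_decomp by auto
  then have "butlast P = hd P # butlast (tl P)" by (metis butlast_snoc)
  then show "walk G (butlast P)" "hd (butlast P) = hd P"
    "set (butlast P) = insert (hd P) (inner_verts P)" "{last (butlast P), last P} \<in> edges G"
    using P(1) decomp walk_append[of "hd P # butlast (tl P)" "[last P]" G] by auto
  show "length (butlast P) \<le> Suc (2*r)" using P(4) by simp
qed

lemma packing_branch_radius:
  assumes u: "u \<in> U"
  shows "packing_branch u \<subseteq> verts G" "packing_branch u \<subseteq> nbhd (induce G (packing_branch u)) (2*r) u"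
proof -
  have butlast_in: "set (butlast P) \<subseteq> packing_branch u" if "P \<in> packing" "hd P = u" for P
    using U_path_butlast(3)[OF U_path_packing[OF that(1)]] that unfolding packing_branch_def by blast
  show "packing_branch u \<subseteq> verts G"
    using u U_verts U_path_packing walk_verts
    unfolding packing_branch_def inner_verts_def U_path_def by blast
  show "packing_branch u \<subseteq> nbhd (induce G (packing_branch u)) (2*r) u"
  proof
    fix z assume "z \<in> packing_branch u"
    then consider "z = u" | P where "P \<in> packing" "hd P = u" "z \<in> inner_verts P"
      unfolding packing_branch_def by blast
    then show "z \<in> nbhd (induce G (packing_branch u)) (2*r) u"
    proof cases
      case 2
      note butlast = U_path_butlast[OF U_path_packing[OF 2(1)]]
      have "z \<in> set (butlast P)" using butlast(3) 2(3) by simp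
      then show ?thesis
        using walk_set_in_nbhd_induce[OF butlast(1) butlast_in[OF 2(1,2)] butlast(4)] butlast(2) 2(2)
        by simp
    qed (simp add: nbhd_self)
  qed
qed

lemma shallow_minor_packing_graph: "shallow_minor (2*r) packing_graph G"
proof (rule shallow_minorI[where \<phi> = packing_branch])
  fix u assume "u \<in> verts packing_graph"
  then show "packing_branch u \<subseteq> verts G"
    "\<exists>c\<in>packing_branch u. packing_branch u \<subseteq> nbhd (induce G (packing_branch u)) (2*r) c"
    using packing_branch_radius unfolding packing_branch_def by auto
next
  fix x y assume "x \<in> verts packing_graph" "y \<in> verts packing_graph" "x \<noteq> y"
  then show "packing_branch x \<inter> packing_branch y = {}"
    using packing_disjoint inner_verts_packing_not_U unfolding packing_branch_def by auto
next
  fix x y assume "{x, y} \<in> edges packing_graph"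
  then obtain P where P: "P \<in> packing" "{x, y} = {hd P, last P}"
    by (auto simp: packing_edges_def ends_def)
  note butlast = U_path_butlast[OF U_path_packing[OF P(1)]]
  have "butlast P \<noteq> []" using butlast(1) by auto
  then have "last (butlast P) \<in> packing_branch (hd P)"
    using butlast(3) P(1) last_in_set unfolding packing_branch_def by fastforce
  moreover have "last P \<in> packing_branch (last P)" unfolding packing_branch_def by simp
  moreover have "{last P, last (butlast P)} \<in> edges G" using butlast(5) by (simp add: insert_commute)
  moreover have "x = hd P \<and> y = last P \<or> x = last P \<and> y = hd P"
    using P(2) by (auto simp: doubleton_eq_iff)
  ultimately show "\<exists>a\<in>packing_branch x. \<exists>b\<in>packing_branch y. {a, b} \<in> edges G"
    using butlast(5) by blast
qed

lemma card_packing: "card packing \<le> C * card U"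
  using sparse[OF is_graph_packing_graph shallow_minor_packing_graph]
    card_image[OF inj_on_ends_packing] by (simp add: packing_edges_def)

definition packing_nbrs :: "'a \<Rightarrow> 'a set" where
  "packing_nbrs u = {w\<in>U. {u, w} \<in> packing_edges}"

definition low :: "'a set" where
  "low = {u\<in>U. card (packing_nbrs u) \<le> 4*C}"

lemma card_U_le_low: "card U \<le> 2 * card low"
proof -
  have "(\<Sum>u\<in>U - low. Suc (4*C)) \<le> (\<Sum>u\<in>U - low. card (packing_nbrs u))"
    by (rule sum_mono) (auto simp: low_def)
  also have "\<dots> \<le> (\<Sum>u\<in>U. card (packing_nbrs u))" using finite_U by (intro sum_mono2) auto
  also have "\<dots> \<le> 2 * card packing_edges"
    using sum_card_nbrs_le[OF is_graph_packing_graph] unfolding packing_nbrs_def by simp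
  also have "\<dots> \<le> 2 * (C * card U)"
    using card_packing card_image[OF inj_on_ends_packing] unfolding packing_edges_def by simp
  finally have "Suc (4*C) * card (U - low) \<le> 2 * C * card U" by (simp add: algebra_simps)
  then have "Suc (4*C) * (2 * card (U - low)) \<le> Suc (4*C) * card U" by simp
  then have "2 * card (U - low) \<le> card U" by (meson mult_le_cancel1 zero_less_Suc)
  moreover have "card U = card (U - low) + card low"
    using finite_U card_Diff_subset[of low U] card_mono[of U low] unfolding low_def by force
  ultimately show ?thesis by linarith
qed

lemma independent_low_exists:
  "\<exists>I. I \<subseteq> low \<and> (\<forall>a\<in>I. \<forall>b\<in>I. {a, b} \<in> packing_edges \<longrightarrow> a = b) \<and>
     card low \<le> (4*C+1) * card I"
proof -
  have "finite low" using finite_U unfolding low_def by simp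
  moreover have "card {w\<in>low. {u, w} \<in> packing_edges} \<le> 4*C" if "u \<in> low" for u
  proof -
    have "card {w\<in>low. {u, w} \<in> packing_edges} \<le> card (packing_nbrs u)"
      using finite_U unfolding packing_nbrs_def low_def by (intro card_mono) auto
    then show ?thesis using that unfolding low_def by simp
  qed
  moreover have "{u, w} \<in> packing_edges \<Longrightarrow> {w, u} \<in> packing_edges" for u w
    by (simp add: insert_commute)
  ultimately obtain I where "I \<subseteq> low" "\<And>a b. a \<in> I \<Longrightarrow> b \<in> I \<Longrightarrow> {a, b} \<in> packing_edges \<Longrightarrow> a = b"
    "card low \<le> (4*C+1) * card I"
    using large_independent_subset[of low "\<lambda>a b. {a, b} \<in> packing_edges" "4*C"] by blast
  then show ?thesis by blast
qed

definition indep :: "'a set" where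
  "indep = (SOME I. I \<subseteq> low \<and> (\<forall>a\<in>I. \<forall>b\<in>I. {a, b} \<in> packing_edges \<longrightarrow> a = b) \<and>
     card low \<le> (4*C+1) * card I)"

lemma indep: "indep \<subseteq> low" "\<And>a b. a \<in> indep \<Longrightarrow> b \<in> indep \<Longrightarrow> {a, b} \<in> packing_edges \<Longrightarrow> a = b"
  "card low \<le> (4*C+1) * card indep"
  using someI_ex[OF independent_low_exists] unfolding indep_def by blast+

lemma indep_U: "indep \<subseteq> U"
  using indep(1) unfolding low_def by blast

lemma finite_indep: "finite indep"
  using indep_U finite_U finite_subset by blast

lemma card_U_le_indep: "card U \<le> 2 * (4*C+1) * card indep"
  using card_U_le_low indep(3) by simp

lemma fan_path_Fan: "u \<in> U \<Longrightarrow> P \<in> Fan u \<Longrightarrow> fan_path G U r u P"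
  using fan_Fan unfolding fan_def by blast

lemma disjoint_Fan: "u \<in> U \<Longrightarrow> disjoint_family_on (\<lambda>P. set (tl P)) (Fan u)"
  using fan_Fan unfolding fan_def by blast

lemma finite_Fan: "u \<in> U \<Longrightarrow> finite (Fan u)"
  using finite_fan[OF finite_verts fan_Fan] .

lemma U_path_fan_path:
  assumes "u \<in> U" "fan_path G U r u P"
  shows "U_path P"
proof -
  have "tl P \<noteq> []" using fan_path_tl_ne[OF assms(2)] .
  then have "2 \<le> length P" by (cases P) (auto simp: Suc_le_eq)
  then show ?thesis using assms unfolding fan_path_def U_path_def by auto
qed

definition free_fan :: "'a \<Rightarrow> 'a list set" where
  "free_fan v = {P\<in>Fan v. inner_verts P \<inter> packed = {}}"

definition blocked_fan :: "'a \<Rightarrow> 'a list set" where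
  "blocked_fan v = {P\<in>Fan v. inner_verts P \<inter> packed \<noteq> {}}"

text \<open>By maximality of the packing, a free fan path ends at a neighbour of its centre in the packing
  graph, and distinct paths of a fan end at distinct vertices.\<close>

lemma card_free_fan:
  assumes v: "v \<in> low"
  shows "card (free_fan v) \<le> 4*C"
proof -
  have vU: "v \<in> U" using v unfolding low_def by simp
  have meets: "set (tl P) \<inter> packing_nbrs v \<noteq> {}" if P: "P \<in> free_fan v" for P
  proof -
    have fp: "fan_path G U r v P" using P fan_path_Fan[OF vU] unfolding free_fan_def by blast
    have "inner_verts P \<inter> packed = {}" using P unfolding free_fan_def by blast
    then have "ends P \<in> packing_edges" by (rule packing_maximal[OF U_path_fan_path[OF vU fp]])
    moreover have "ends P = {v, last P}" "last P \<in> U" using fp unfolding ends_def fan_path_def by auto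
    moreover have "last P \<in> set (tl P)" using fan_path_tl_ne[OF fp] by (cases P) auto
    ultimately show ?thesis unfolding packing_nbrs_def by auto
  qed
  have "finite (packing_nbrs v)" using finite_U unfolding packing_nbrs_def by simp
  moreover have "disjoint_family_on (\<lambda>P. set (tl P)) (free_fan v)"
    by (rule disjoint_family_on_mono[OF _ disjoint_Fan[OF vU]]) (auto simp: free_fan_def)
  ultimately have "card (free_fan v) \<le> card (packing_nbrs v)"
    using meets by (rule card_le_card_if_disjoint_meets)
  then show ?thesis using v unfolding low_def by simp
qed

lemma card_blocked_fan:
  assumes v: "v \<in> low"
  shows "d \<le> 4*C + card (blocked_fan v)"
proof -
  have vU: "v \<in> U" using v unfolding low_def by simp
  have "Fan v = free_fan v \<union> blocked_fan v" "free_fan v \<inter> blocked_fan v = {}"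
    unfolding free_fan_def blocked_fan_def by auto
  moreover have "finite (free_fan v)" "finite (blocked_fan v)"
    using finite_Fan[OF vU] unfolding free_fan_def blocked_fan_def by auto
  ultimately have "card (Fan v) = card (free_fan v) + card (blocked_fan v)"
    by (metis card_Un_disjoint)
  then show ?thesis using card_Fan[OF vU] card_free_fan[OF v] by simp
qed

definition approach :: "'a list \<Rightarrow> 'a list" where
  "approach P = takeWhile (\<lambda>z. z \<notin> packed) (tl P)"

definition first_packed :: "'a list \<Rightarrow> 'a" where
  "first_packed P = hd (dropWhile (\<lambda>z. z \<notin> packed) (tl P))"

lemma blocked_fan_decomp:
  assumes v: "v \<in> U" and P: "P \<in> blocked_fan v"
  obtains c where "P = v # approach P @ first_packed P # c" "c \<noteq> []" "first_packed P \<in> packed"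
proof -
  have fp: "fan_path G U r v P" using P fan_path_Fan[OF v] unfolding blocked_fan_def by blast
  then obtain T where P_v: "P = v # T" unfolding fan_path_def by (cases P) auto
  have "\<exists>z\<in>set T. z \<in> packed"
    using P P_v unfolding blocked_fan_def inner_verts_def by auto
  then have ne: "dropWhile (\<lambda>z. z \<notin> packed) T \<noteq> []" by (simp add: dropWhile_eq_Nil_conv)
  define c where "c = tl (dropWhile (\<lambda>z. z \<notin> packed) T)"
  have "dropWhile (\<lambda>z. z \<notin> packed) T = first_packed P # c"
    using ne P_v unfolding first_packed_def c_def by simp
  then have decomp: "P = v # approach P @ first_packed P # c"
    using P_v takeWhile_dropWhile_id[of "\<lambda>z. z \<notin> packed" T] unfolding approach_def by simp
  have packed: "first_packed P \<in> packed"
    using hd_dropWhile[OF ne] P_v unfolding first_packed_def by simp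
  have "c \<noteq> []"
  proof
    assume "c = []"
    then have "last P = first_packed P" using arg_cong[OF decomp, of last] by simp
    moreover have "last P \<in> U" using fp unfolding fan_path_def by simp
    ultimately show False using packed packed_not_U by auto
  qed
  then show ?thesis using that decomp packed by blast
qed

lemma blocked_fan_approach:
  assumes v: "v \<in> U" and P: "P \<in> blocked_fan v"
  shows "walk G (v # approach P @ [first_packed P])" "length (v # approach P) \<le> Suc r"
    "first_packed P \<in> packed" "first_packed P \<in> set (tl P)"
    "set (approach P) \<inter> packed = {}" "set (approach P) \<inter> U = {}"
proof -
  have fp: "fan_path G U r v P" using P fan_path_Fan[OF v] unfolding blocked_fan_def by blast
  obtain c where "P = v # approach P @ first_packed P # c" "c \<noteq> []" "first_packed P \<in> packed"
    using blocked_fan_decomp[OF v P] by blast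
  moreover obtain a b where ab: "approach P = a" "first_packed P = b" by blast
  ultimately have c: "P = v # a @ b # c" "c \<noteq> []" "b \<in> packed" by simp_all
  have "walk G ((v # a @ [b]) @ c)" using fp c(1) unfolding fan_path_def by simp
  then show "walk G (v # approach P @ [first_packed P])" using ab walk_prefix by fastforce
  show "length (v # approach P) \<le> Suc r" using fp c(1) ab unfolding fan_path_def by simp
  show "first_packed P \<in> packed" "first_packed P \<in> set (tl P)" using c ab by simp_all
  show "set (approach P) \<inter> packed = {}" unfolding approach_def by (auto dest: set_takeWhileD)
  have "distinct P" "last P \<in> set c" using fp c unfolding fan_path_def by auto
  then have "set a \<subseteq> inner_verts P" using c(1) unfolding inner_verts_def by auto
  then show "set (approach P) \<inter> U = {}" using fp ab unfolding fan_path_def by blast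
qed

text \<open>Two approaches of distinct independent centres that meet would give a \<open>U\<close>-path between the
  centres avoiding the packed vertices, which by maximality of the packing would make them adjacent.\<close>

lemma approaches_disjoint:
  assumes v: "v \<in> indep" "v' \<in> indep" "v \<noteq> v'" and P: "P \<in> blocked_fan v" "P' \<in> blocked_fan v'"
  shows "set (approach P) \<inter> set (approach P') = {}"
proof (rule ccontr)
  assume "set (approach P) \<inter> set (approach P') \<noteq> {}"
  then obtain y where y: "y \<in> set (approach P)" "y \<in> set (approach P')" by blast
  have vU: "v \<in> U" "v' \<in> U" using v indep_U by auto
  note A = blocked_fan_approach[OF vU(1) P(1)] and A' = blocked_fan_approach[OF vU(2) P(2)]
  obtain as bs where as: "approach P = as @ y # bs" using y(1) split_list by metis
  obtain as' bs' where as': "approach P' = as' @ y # bs'" using y(2) split_list by metis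
  have "walk G ((v # as @ [y]) @ bs @ [first_packed P])" using A(1) as by simp
  then have w: "walk G (v # as @ [y])" by (rule walk_prefix) simp
  have "walk G ((v' # as' @ [y]) @ bs' @ [first_packed P'])" using A'(1) as' by simp
  then have "walk G (v' # as' @ [y])" by (rule walk_prefix) simp
  then have w': "walk G (y # rev as' @ [v'])" using walk_rev[of G "v' # as' @ [y]"] by simp
  define W where "W = v # as @ y # rev as' @ [v']"
  have "walk G W" using walk_join[OF w w'] unfolding W_def by simp
  then obtain Q where Q: "walk G Q" "distinct Q" "hd Q = hd W" "last Q = last W"
    "set Q \<subseteq> set W" "length Q \<le> length W"
    by (rule walk_imp_distinct_walk)
  have W: "hd W = v" "last W = v'" "set W = {v, v'} \<union> set as \<union> set (y # as')"
    "length W \<le> 2*r+1" using A(2) A'(2) as as' unfolding W_def by auto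
  have inner: "inner_verts Q \<subseteq> set (approach P) \<union> set (approach P')"
    using Q(3-5) W(1-3) as as' unfolding inner_verts_def by auto
  have "Q \<noteq> []" using Q(1) by auto
  then have "2 \<le> length Q" using two_le_length_if_hd_neq_last[of Q] Q(3,4) W(1,2) v(3) by simp
  then have "U_path Q" using Q W vU inner A(6) A'(6) unfolding U_path_def by auto
  moreover have "inner_verts Q \<inter> packed = {}" using inner A(5) A'(5) by auto
  ultimately have "ends Q \<in> packing_edges" by (rule packing_maximal)
  then have "{v, v'} \<in> packing_edges" using Q(3,4) W(1,2) unfolding ends_def by simp
  then show False using indep(2)[OF v(1,2)] v(3) by blast
qed

definition hit :: "'a \<Rightarrow> 'a list set" where
  "hit v = {Q\<in>packing. \<exists>P\<in>blocked_fan v. first_packed P \<in> inner_verts Q}"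

definition rep :: "'a list \<Rightarrow> 'a" where
  "rep Q = (SOME z. z \<in> inner_verts Q)"

definition star :: "'a \<Rightarrow> 'a set" where
  "star v = insert v (\<Union>P\<in>blocked_fan v. set (approach P))"

text \<open>The second minor has a vertex for each independent centre \<open>v\<close>, with branch set \<open>star v\<close>, and
  one for each path \<open>Q\<close> of the packing hit by a blocked fan path, with branch set the interior of \<open>Q\<close>.
  Since \<open>bounded_expansion\<close> only speaks about minors on the vertex type of \<open>G\<close>, the latter vertex is
  named by an arbitrary interior vertex \<open>rep Q\<close>.\<close>

definition hit_graph :: "'a graph" where
  "hit_graph = (indep \<union> (\<Union>v\<in>indep. rep ` hit v), {{v, rep Q} | v Q. v \<in> indep \<and> Q \<in> hit v})"

definition hit_branch :: "'a \<Rightarrow> 'a set" where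
  "hit_branch z = (if z \<in> indep then star z else \<Union>{inner_verts Q | Q. Q \<in> packing \<and> z \<in> inner_verts Q})"

lemma verts_hit_graph [simp]: "verts hit_graph = indep \<union> (\<Union>v\<in>indep. rep ` hit v)"
  unfolding hit_graph_def verts_def by simp

lemma edges_hit_graph [simp]: "edges hit_graph = {{v, rep Q} | v Q. v \<in> indep \<and> Q \<in> hit v}"
  unfolding hit_graph_def edges_def by simp

lemma hit_packing: "Q \<in> hit v \<Longrightarrow> Q \<in> packing"
  unfolding hit_def by simp

lemma finite_hit: "finite (hit v)"
  using finite_packing unfolding hit_def by simp

lemma rep_hit: "Q \<in> hit v \<Longrightarrow> rep Q \<in> inner_verts Q"
  unfolding hit_def rep_def by (auto intro: someI)

lemma rep_not_U: "Q \<in> hit v \<Longrightarrow> rep Q \<notin> U"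
  using rep_hit inner_verts_packing_not_U hit_packing by blast

lemma hit_branch_rep:
  assumes "Q \<in> hit v"
  shows "hit_branch (rep Q) = inner_verts Q"
proof -
  have Q: "Q \<in> packing" "rep Q \<in> inner_verts Q" using assms hit_packing rep_hit by auto
  then have "{inner_verts Q' | Q'. Q' \<in> packing \<and> rep Q \<in> inner_verts Q'} = {inner_verts Q}"
    using packing_disjoint by blast
  moreover have "rep Q \<notin> indep" using rep_not_U[OF assms] indep_U by auto
  ultimately show ?thesis unfolding hit_branch_def by simp
qed

lemma finite_verts_hit_graph: "finite (verts hit_graph)"
  using finite_indep finite_hit by simp

lemma is_graph_hit_graph: "is_graph hit_graph"
  unfolding is_graph_def
proof (intro conjI ballI)
  fix e assume "e \<in> edges hit_graph"
  then obtain v Q where e: "e = {v, rep Q}" "v \<in> indep" "Q \<in> hit v" by auto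
  then have "v \<noteq> rep Q" using rep_not_U indep_U by blast
  then show "\<exists>a b. e = {a, b} \<and> a \<noteq> b \<and> a \<in> verts hit_graph \<and> b \<in> verts hit_graph"
    using e by auto
qed (rule finite_verts_hit_graph)

lemma star_radius:
  assumes v: "v \<in> indep"
  shows "star v \<subseteq> verts G" "star v \<subseteq> nbhd (induce G (star v)) (2*r) v"
proof -
  have vU: "v \<in> U" using v indep_U by blast
  have approach: "walk G (v # approach P)" "set (v # approach P) \<subseteq> star v"
    "length (v # approach P) \<le> Suc (2*r)" if "P \<in> blocked_fan v" for P
  proof -
    note A = blocked_fan_approach[OF vU that]
    show "walk G (v # approach P)" using walk_prefix[of G "v # approach P"] A(1) by simp
    show "set (v # approach P) \<subseteq> star v" using that unfolding star_def by auto
    show "length (v # approach P) \<le> Suc (2*r)" using A(2) by simp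
  qed
  show "star v \<subseteq> verts G" using vU U_verts approach(1) walk_verts unfolding star_def by fastforce
  show "star v \<subseteq> nbhd (induce G (star v)) (2*r) v"
  proof
    fix z assume "z \<in> star v"
    then consider "z = v" | P where "P \<in> blocked_fan v" "z \<in> set (approach P)"
      unfolding star_def by blast
    then show "z \<in> nbhd (induce G (star v)) (2*r) v"
    proof cases
      case 2
      then show ?thesis using walk_set_in_nbhd_induce[OF approach[OF 2(1)]] by simp
    qed (simp add: nbhd_self)
  qed
qed

lemma inner_verts_radius:
  assumes Q: "Q \<in> packing" and ne: "inner_verts Q \<noteq> {}"
  shows "inner_verts Q \<subseteq> verts G" "\<exists>c\<in>inner_verts Q. inner_verts Q \<subseteq> nbhd (induce G (inner_verts Q)) (2*r) c"
proof -
  have ok: "walk G Q" "distinct Q" "2 \<le> length Q" "length Q \<le> 2*r+1"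
    using U_path_packing[OF Q] unfolding U_path_def by auto
  show "inner_verts Q \<subseteq> verts G" using walk_verts[OF ok(1)] unfolding inner_verts_def by auto
  define L where "L = butlast (tl Q)"
  have L: "Q = [hd Q] @ L @ [last Q]" "set L = inner_verts Q"
    using inner_verts_decomp[OF ok(2,3)] unfolding L_def by simp_all
  then have "L \<noteq> []" using ne by auto
  then have "walk G L" using ok(1) L(1) walk_prefix walk_suffix by (metis append_is_Nil_conv not_Cons_self2)
  moreover have "length L \<le> Suc (2*r)" using ok(4) unfolding L_def by simp
  ultimately have "inner_verts Q \<subseteq> nbhd (induce G (inner_verts Q)) (2*r) (hd L)"
    using walk_set_in_nbhd_induce[of G L "inner_verts Q"] L(2) by blast
  moreover have "hd L \<in> inner_verts Q" using \<open>L \<noteq> []\<close> L(2) by (metis list.set_sel(1))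
  ultimately show "\<exists>c\<in>inner_verts Q. inner_verts Q \<subseteq> nbhd (induce G (inner_verts Q)) (2*r) c" by blast
qed

lemma star_inner_verts_disjoint:
  assumes "v \<in> indep" "Q \<in> packing"
  shows "star v \<inter> inner_verts Q = {}"
proof -
  have vU: "v \<in> U" using assms(1) indep_U by blast
  then have "v \<notin> inner_verts Q" using inner_verts_packing_not_U[OF assms(2)] by blast
  moreover have "set (approach P) \<inter> inner_verts Q = {}" if "P \<in> blocked_fan v" for P
    using blocked_fan_approach(5)[OF vU that] assms(2) unfolding packed_def by blast
  ultimately show ?thesis unfolding star_def by blast
qed

lemma star_disjoint:
  assumes "v \<in> indep" "v' \<in> indep" "v \<noteq> v'"
  shows "star v \<inter> star v' = {}"
proof -
  have vU: "v \<in> U" "v' \<in> U" using assms indep_U by auto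
  have "v \<notin> set (approach P')" if "P' \<in> blocked_fan v'" for P'
    using blocked_fan_approach(6)[OF vU(2) that] vU(1) by blast
  moreover have "v' \<notin> set (approach P)" if "P \<in> blocked_fan v" for P
    using blocked_fan_approach(6)[OF vU(1) that] vU(2) by blast
  ultimately show ?thesis using approaches_disjoint[OF assms] assms(3) unfolding star_def by blast
qed

lemma hit_graph_vertex_cases:
  assumes "x \<in> verts hit_graph"
  obtains "x \<in> indep" "hit_branch x = star x"
  | v Q where "v \<in> indep" "Q \<in> hit v" "x = rep Q" "x \<notin> indep" "hit_branch x = inner_verts Q"
proof (cases "x \<in> indep")
  case True
  then show ?thesis using that(1) unfolding hit_branch_def by simp
next
  case False
  then obtain v Q where "v \<in> indep" "Q \<in> hit v" "x = rep Q" using assms by auto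
  then show ?thesis using that(2) False hit_branch_rep by blast
qed

lemma hit_branch_disjoint:
  assumes x: "x \<in> verts hit_graph" and y: "y \<in> verts hit_graph" and "x \<noteq> y"
  shows "hit_branch x \<inter> hit_branch y = {}"
  using x
proof (cases rule: hit_graph_vertex_cases)
  case x1: 1
  from y show ?thesis
  proof (cases rule: hit_graph_vertex_cases)
    case 1
    then show ?thesis using x1 star_disjoint \<open>x \<noteq> y\<close> by simp
  next
    case (2 v Q)
    then show ?thesis using x1 star_inner_verts_disjoint hit_packing by simp
  qed
next
  case x2: (2 v Q)
  from y show ?thesis
  proof (cases rule: hit_graph_vertex_cases)
    case 1
    then show ?thesis using x2 star_inner_verts_disjoint hit_packing by blast
  next
    case (2 v' Q')
    then have "Q \<noteq> Q'" using x2 \<open>x \<noteq> y\<close> by auto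
    then show ?thesis using x2 2 packing_disjoint hit_packing by simp
  qed
qed

lemma hit_edge_realised:
  assumes v: "v \<in> indep" and Q: "Q \<in> hit v"
  shows "\<exists>a\<in>hit_branch v. \<exists>b\<in>hit_branch (rep Q). {a, b} \<in> edges G"
proof -
  obtain P where P: "P \<in> blocked_fan v" "first_packed P \<in> inner_verts Q"
    using Q unfolding hit_def by blast
  have "walk G ((v # approach P) @ [first_packed P])"
    using blocked_fan_approach(1)[OF _ P(1)] v indep_U by auto
  then have "{last (v # approach P), first_packed P} \<in> edges G"
    using walk_append[of "v # approach P" "[first_packed P]" G] by simp
  moreover have "set (v # approach P) \<subseteq> hit_branch v"
    using P(1) v unfolding hit_branch_def star_def by auto
  then have "last (v # approach P) \<in> hit_branch v" using last_in_set[of "v # approach P"] by blast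
  moreover have "first_packed P \<in> hit_branch (rep Q)" using hit_branch_rep[OF Q] P(2) by simp
  ultimately show ?thesis by blast
qed

lemma shallow_minor_hit_graph: "shallow_minor (2*r) hit_graph G"
proof (rule shallow_minorI[where \<phi> = hit_branch])
  fix x assume x: "x \<in> verts hit_graph"
  then show "hit_branch x \<subseteq> verts G"
  proof (cases rule: hit_graph_vertex_cases)
    case 1
    then show ?thesis using star_radius(1) by simp
  next
    case (2 v Q)
    then show ?thesis using inner_verts_radius(1) hit_packing rep_hit by blast
  qed
  from x show "\<exists>c\<in>hit_branch x. hit_branch x \<subseteq> nbhd (induce G (hit_branch x)) (2*r) c"
  proof (cases rule: hit_graph_vertex_cases)
    case 1
    then show ?thesis using star_radius(2) unfolding star_def by auto
  next
    case (2 v Q)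
    then show ?thesis using inner_verts_radius(2) hit_packing rep_hit by fastforce
  qed
next
  fix x y assume "x \<in> verts hit_graph" "y \<in> verts hit_graph" "x \<noteq> y"
  then show "hit_branch x \<inter> hit_branch y = {}" by (rule hit_branch_disjoint)
next
  fix x y assume "{x, y} \<in> edges hit_graph"
  then obtain v Q where vQ: "{x, y} = {v, rep Q}" "v \<in> indep" "Q \<in> hit v" by auto
  then have "x = v \<and> y = rep Q \<or> x = rep Q \<and> y = v" by (auto simp: doubleton_eq_iff)
  moreover obtain a b where "a \<in> hit_branch v" "b \<in> hit_branch (rep Q)" "{a, b} \<in> edges G"
    using hit_edge_realised[OF vQ(2,3)] by blast
  moreover have "{b, a} \<in> edges G" using calculation(4) by (simp add: insert_commute)
  ultimately show "\<exists>a\<in>hit_branch x. \<exists>b\<in>hit_branch y. {a, b} \<in> edges G" by blast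
qed

lemma card_edges_hit_graph: "(\<Sum>v\<in>indep. card (hit v)) \<le> card (edges hit_graph)"
proof -
  define f where "f p = {fst p, rep (snd p)}" for p :: "'a \<times> 'a list"
  have "inj_on f (SIGMA v:indep. hit v)"
  proof (rule inj_onI)
    fix p p' assume p: "p \<in> (SIGMA v:indep. hit v)" "p' \<in> (SIGMA v:indep. hit v)" "f p = f p'"
    obtain v Q v' Q' where vQ: "p = (v, Q)" "p' = (v', Q')" "v \<in> indep" "v' \<in> indep"
      "Q \<in> hit v" "Q' \<in> hit v'" using p(1,2) by auto
    have "rep Q \<notin> U" "rep Q' \<notin> U" "v \<in> U" "v' \<in> U"
      using rep_not_U[OF vQ(5)] rep_not_U[OF vQ(6)] indep_U vQ(3,4) by blast+
    then have "v = v'" "rep Q = rep Q'" using p(3) vQ(1,2) unfolding f_def by (auto simp: doubleton_eq_iff)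
    moreover have "rep Q \<in> inner_verts Q \<inter> inner_verts Q'"
      using rep_hit[OF vQ(5)] rep_hit[OF vQ(6)] \<open>rep Q = rep Q'\<close> by simp
    then have "Q = Q'" using packing_disjoint[OF hit_packing[OF vQ(5)] hit_packing[OF vQ(6)]] by blast
    ultimately show "p = p'" using vQ(1,2) by simp
  qed
  moreover have "f ` (SIGMA v:indep. hit v) \<subseteq> edges hit_graph" unfolding f_def by fastforce
  moreover have "finite (edges hit_graph)" by (rule finite_edges[OF is_graph_hit_graph])
  ultimately have "card (SIGMA v:indep. hit v) \<le> card (edges hit_graph)" by (rule card_inj_on_le)
  then show ?thesis using finite_indep finite_hit by simp
qed

lemma card_verts_hit_graph: "card (verts hit_graph) \<le> card indep + card packing"
proof -
  have "verts hit_graph \<subseteq> indep \<union> rep ` packing" using hit_packing by auto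
  then have "card (verts hit_graph) \<le> card (indep \<union> rep ` packing)"
    using finite_indep finite_packing by (intro card_mono) auto
  also have "\<dots> \<le> card indep + card (rep ` packing)" by (rule card_Un_le)
  also have "card (rep ` packing) \<le> card packing" by (rule card_image_le[OF finite_packing])
  finally show ?thesis by simp
qed

lemma card_inner_verts: "Q \<in> packing \<Longrightarrow> card (inner_verts Q) \<le> 2*r"
proof -
  assume "Q \<in> packing"
  then have Q: "distinct Q" "2 \<le> length Q" "length Q \<le> 2*r+1"
    using U_path_packing unfolding U_path_def by auto
  have "card (inner_verts Q) \<le> length (butlast (tl Q))"
    using inner_verts_decomp(2)[OF Q(1,2)] card_length by metis
  then show ?thesis using Q(3) by simp
qed

text \<open>Distinct paths of a fan are first blocked at distinct packed vertices, and these lie in the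
  interiors of the paths hit from \<open>v\<close>.\<close>

lemma card_blocked_fan_le_hit:
  assumes v: "v \<in> indep"
  shows "card (blocked_fan v) \<le> 2*r * card (hit v)"
proof -
  have vU: "v \<in> U" using v indep_U by blast
  have "set (tl P) \<inter> (\<Union>Q\<in>hit v. inner_verts Q) \<noteq> {}" if P: "P \<in> blocked_fan v" for P
  proof -
    obtain Q where "Q \<in> packing" "first_packed P \<in> inner_verts Q"
      using blocked_fan_approach(3)[OF vU P] unfolding packed_def by blast
    then have "Q \<in> hit v" unfolding hit_def using P by blast
    then show ?thesis
      using blocked_fan_approach(4)[OF vU P] \<open>first_packed P \<in> inner_verts Q\<close> by blast
  qed
  moreover have "finite (\<Union>Q\<in>hit v. inner_verts Q)"
    using finite_hit unfolding inner_verts_def by blast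
  moreover have "disjoint_family_on (\<lambda>P. set (tl P)) (blocked_fan v)"
    by (rule disjoint_family_on_mono[OF _ disjoint_Fan[OF vU]]) (auto simp: blocked_fan_def)
  ultimately have "card (blocked_fan v) \<le> card (\<Union>Q\<in>hit v. inner_verts Q)"
    using card_le_card_if_disjoint_meets[of _ "\<lambda>P. set (tl P)" "blocked_fan v"] by (simp add: Int_commute)
  also have "\<dots> \<le> (\<Sum>Q\<in>hit v. card (inner_verts Q))" by (rule card_UN_le[OF finite_hit])
  also have "\<dots> \<le> (\<Sum>Q\<in>hit v. 2*r)" by (rule sum_mono) (rule card_inner_verts[OF hit_packing])
  finally show ?thesis by (simp add: mult.commute)
qed

text \<open>Double counting: each independent centre has at least \<open>d - 4 C\<close> blocked fan paths, but these are
  controlled by the edges of the sparse minor \<open>hit_graph\<close>, whose size is linear in the number of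
  independent centres.\<close>

theorem fan_size_le: "d \<le> 4*C + 2*r*C*(1 + 2*C*(4*C+1))"
proof -
  define s where "s = card indep"
  have "0 < card U" using U_nonempty finite_U by (simp add: card_gt_0_iff)
  then have "0 < s" using card_U_le_indep unfolding s_def by (metis gr0I mult_0_right not_le)
  have "s * (d - 4*C) = (\<Sum>v\<in>indep. d - 4*C)" unfolding s_def by simp
  also have "\<dots> \<le> (\<Sum>v\<in>indep. card (blocked_fan v))"
    using card_blocked_fan indep(1) by (intro sum_mono) (fastforce simp: subset_iff)
  also have "\<dots> \<le> (\<Sum>v\<in>indep. 2*r * card (hit v))" by (intro sum_mono card_blocked_fan_le_hit)
  also have "\<dots> \<le> 2*r * card (edges hit_graph)"
    using mult_le_mono2[OF card_edges_hit_graph, of "2*r"] by (simp add: sum_distrib_left)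
  also have "\<dots> \<le> 2*r * (C * card (verts hit_graph))"
    using sparse[OF is_graph_hit_graph shallow_minor_hit_graph] by simp
  also have "\<dots> \<le> 2*r * (C * (s + C * (2 * (4*C+1) * s)))"
  proof -
    have "card packing \<le> C * (2 * (4*C+1) * s)"
      using card_packing card_U_le_indep unfolding s_def by (meson le_trans mult_le_mono2)
    then show ?thesis using card_verts_hit_graph unfolding s_def by simp
  qed
  also have "\<dots> = s * (2*r*C*(1 + 2*C*(4*C+1)))" by (simp add: algebra_simps)
  finally have "d - 4*C \<le> 2*r*C*(1 + 2*C*(4*C+1))" using \<open>0 < s\<close> by simp
  then show ?thesis by simp
qed

end

lemma rank_finite_if_shallow_minors_sparse:
  fixes G :: "'a graph"
  assumes G: "is_graph G"
    and sparse: "\<And>H :: 'a graph. is_graph H \<Longrightarrow> shallow_minor (2*r) H G \<Longrightarrow>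
      card (edges H) \<le> C * card (verts H)"
    and v: "v \<in> verts G"
  shows "rank G r (r * Suc (4*C + 2*r*C*(1 + 2*C*(4*C+1)))) v \<noteq> \<infinity>"
proof
  define d where "d = Suc (4*C + 2*r*C*(1 + 2*C*(4*C+1)))"
  assume "rank G r (r * Suc (4*C + 2*r*C*(1 + 2*C*(4*C+1)))) v = \<infinity>"
  then have unranked: "rank G r (r * d) v = \<infinity>" unfolding d_def .
  have fin: "finite (verts G)" using G unfolding is_graph_def by simp
  obtain U where U: "U \<subseteq> verts G" "v \<in> U"
    "\<And>u S. u \<in> U \<Longrightarrow> S \<subseteq> verts G - {u} \<Longrightarrow> card S \<le> r * d \<Longrightarrow>
      \<exists>w\<in>U. w \<noteq> u \<and> w \<in> nbhd (delete_verts G S) r u"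
    using unranked_core[OF fin v unranked] by blast
  have "\<forall>u\<in>U. \<exists>Fs. fan G U r u Fs \<and> card Fs = d"
    using fan_exists[OF U(1) _ fin U(3)] by blast
  then obtain Fan where Fan: "\<And>u. u \<in> U \<Longrightarrow> fan G U r u (Fan u) \<and> card (Fan u) = d"
    by metis
  interpret fans_in_sparse_graph G U r C d Fan
    using G U(1,2) Fan sparse by unfold_locales auto
  show False using fan_size_le unfolding d_def by simp
qed

lemma bounded_expansion_imp_rank_finite:
  fixes \<C> :: "'a graph set"
  assumes "\<forall>G\<in>\<C>. is_graph G" "bounded_expansion \<C>"
  shows "\<exists>m. \<forall>G\<in>\<C>. \<forall>v\<in>verts G. rank G r m v \<noteq> \<infinity>"
proof -
  obtain c :: real where c: "\<forall>G\<in>\<C>. \<forall>H :: 'a graph. is_graph H \<and> shallow_minor (2*r) H G \<longrightarrow>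
      real (card (edges H)) \<le> c * real (card (verts H))"
    using assms(2) unfolding bounded_expansion_def by blast
  define C where "C = nat \<lceil>c\<rceil>"
  have sparse: "card (edges H) \<le> C * card (verts H)"
    if "G \<in> \<C>" "is_graph H" "shallow_minor (2*r) H G" for G H :: "'a graph"
  proof -
    have "real (card (edges H)) \<le> c * real (card (verts H))" using c that by blast
    also have "\<dots> \<le> real C * real (card (verts H))"
      unfolding C_def by (intro mult_right_mono real_nat_ceiling_ge) simp
    finally show ?thesis by (simp flip: of_nat_mult)
  qed
  have "rank G r (r * Suc (4*C + 2*r*C*(1 + 2*C*(4*C+1)))) v \<noteq> \<infinity>"
    if "G \<in> \<C>" "v \<in> verts G" for G v
    using rank_finite_if_shallow_minors_sparse[of G r C v] sparse[OF that(1)] assms(1) that by blast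
  then show ?thesis by blast
qed

lemma rank_finite_imp_bounded_expansion:
  fixes \<C> :: "'a graph set"
  assumes "\<forall>G\<in>\<C>. is_graph G" "\<forall>r. \<exists>m. \<forall>G\<in>\<C>. \<forall>v\<in>verts G. rank G r m v \<noteq> \<infinity>"
  shows "bounded_expansion \<C>"
  unfolding bounded_expansion_def
proof
  fix r
  obtain m where m: "\<forall>G\<in>\<C>. \<forall>v\<in>verts G. rank G (4*r+1) m v \<noteq> \<infinity>" using assms(2) by blast
  have "real (card (edges H)) \<le> real ((m+1)^(4*r+1)) * real (card (verts H))"
    if "G \<in> \<C>" "is_graph H \<and> shallow_minor r H G" for G H :: "'a graph"
  proof -
    have "card (edges H) \<le> (m+1)^(4*r+1) * card (verts H)"
      using shallow_minor_density_if_ranked[of G r m H] assms(1) m that by blast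
    then show ?thesis by (metis of_nat_le_iff of_nat_mult)
  qed
  then show "\<exists>c::real. \<forall>G\<in>\<C>. \<forall>H :: 'a graph. is_graph H \<and> shallow_minor r H G \<longrightarrow>
      real (card (edges H)) \<le> c * real (card (verts H))"
    by blast
qed

theorem theorem1p4:
  fixes \<C> :: "'a graph set"
  assumes "\<forall>G\<in>\<C>. is_graph G"
  shows "bounded_expansion \<C> \<longleftrightarrow>
         (\<forall>r::nat. \<exists>m::nat. \<forall>G\<in>\<C>. \<forall>v\<in>verts G. rank G r m v \<noteq> \<infinity>)"
  using assms bounded_expansion_imp_rank_finite rank_finite_imp_bounded_expansion by blast

end
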